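(* In the setting below, let $n\in\mathbb{N}$ and let $b\in\operatorname{Mat}_n(D_I)$ satisfy $|b-\mathbb{1}|_t<1$. Then for each $i\in I$ there exist $b_i'\in\operatorname{GL}_n(Q_i')$ and $b_i\in\operatorname{GL}_n(Q_i)$ such that $b=b_i'b_i$.
   Context: Let $K$ be a number field with ring of integers $R$; for $x\in K$ put $\|x\|=\max_{\sigma\in\operatorname{Hom}(K,\mathbb{C})}|\sigma(x)|$, and for a subring $S\subseteq K$ let $S\{t\}=\{\sum_{n\ge0}a_nt^n\in S[[t]]:\limsup_n\|a_n\|^{1/n}\le1\}$. Let $I$ be a finite index set containing the symbol $1$, and for each $i\in I$ let $a_i\in R$ be nonzero and not a unit, with $a_iR+a_jR=R$ for distinct $i,j\in I$. For $J\subseteq I$ let $a_J=\prod_{j\in J}a_j$ ($a_\emptyset=1$), $R_J=R[1/a_J]$, and $D_J=R_J\{t\}$ if $1\notin J$, $D_J=R_J[[t]]$ if $1\in J$; all are subrings of $D_I=R_I[[t]]$. For $i\in I$ put $D_i=D_{I\setminus\{i\}}$, $Q=\operatorname{Quot}(D_I)$, $Q_i=\operatorname{Quot}(D_i)\subseteq Q$ and $Q_i'=\bigcap_{j\in I,j\ne i}Q_j$. $|\cdot|_t=e^{-v_t}$ is the $t$-adic absolute value on $R_I[[t]]$, extended to matrices by the maximum over entries; $\mathbb{1}$ is the identity matrix. *)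

theory Defs
  imports Complex_Main
    "HOL-Computational_Algebra.Formal_Laurent_Series"
    "HOL-Computational_Algebra.Polynomial"
    "HOL-Library.Extended_Real"
    "Jordan_Normal_Form.Matrix"
begin

text \<open>Number fields are modelled as subfields of the complex numbers that are
  finite-dimensional over the rationals.\<close>

definition subfield_C :: "complex set \<Rightarrow> bool" where
  "subfield_C K \<longleftrightarrow> 0 \<in> K \<and> 1 \<in> K \<and>
     (\<forall>x\<in>K. \<forall>y\<in>K. x + y \<in> K \<and> x * y \<in> K \<and> - x \<in> K) \<and>
     (\<forall>x\<in>K. x \<noteq> 0 \<longrightarrow> inverse x \<in> K)"

definition number_field :: "complex set \<Rightarrow> bool" where
  "number_field K \<longleftrightarrow> subfield_C K \<and>
     (\<exists>B. finite B \<and> B \<subseteq> K \<and>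
        (\<forall>x\<in>K. \<exists>c. x = (\<Sum>b\<in>B. of_rat (c b) * b)))"

text \<open>Field embeddings \<open>K \<rightarrow> \<complex>\<close> (set to 0 outside K so that the set is finite).\<close>
definition embeddings :: "complex set \<Rightarrow> (complex \<Rightarrow> complex) set" where
  "embeddings K = {\<sigma>. (\<forall>x\<in>K. \<forall>y\<in>K. \<sigma> (x + y) = \<sigma> x + \<sigma> y \<and> \<sigma> (x * y) = \<sigma> x * \<sigma> y)
      \<and> \<sigma> 1 = 1 \<and> (\<forall>x. x \<notin> K \<longrightarrow> \<sigma> x = 0)}"

definition house :: "complex set \<Rightarrow> complex \<Rightarrow> real" where
  "house K x = Max ((\<lambda>\<sigma>. cmod (\<sigma> x)) ` embeddings K)"

definition algebraic_integer :: "complex \<Rightarrow> bool" where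
  "algebraic_integer x \<longleftrightarrow>
     (\<exists>p :: int poly. lead_coeff p = 1 \<and> poly (map_poly of_int p) x = 0)"

definition ring_of_integers :: "complex set \<Rightarrow> complex set" where
  "ring_of_integers K = {x \<in> K. algebraic_integer x}"

definition localize :: "complex set \<Rightarrow> complex \<Rightarrow> complex set" where
  "localize S a = {r / a ^ k | r k. r \<in> S}"

definition fps_over :: "complex set \<Rightarrow> complex fps set" where
  "fps_over S = {f. \<forall>n. fps_nth f n \<in> S}"

definition conv_fps_over :: "complex set \<Rightarrow> complex set \<Rightarrow> complex fps set" where
  "conv_fps_over K S = {f \<in> fps_over S.
      limsup (\<lambda>n. ereal (house K (fps_nth f n) powr (1 / real n))) \<le> 1}"

definition aJ :: "('i \<Rightarrow> complex) \<Rightarrow> 'i set \<Rightarrow> complex" where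
  "aJ a J = (\<Prod>j\<in>J. a j)"

definition RJ :: "complex set \<Rightarrow> ('i \<Rightarrow> complex) \<Rightarrow> 'i set \<Rightarrow> complex set" where
  "RJ K a J = localize (ring_of_integers K) (aJ a J)"

definition DJ :: "complex set \<Rightarrow> ('i \<Rightarrow> complex) \<Rightarrow> 'i \<Rightarrow> 'i set \<Rightarrow> complex fps set" where
  "DJ K a i1 J = (if i1 \<in> J then fps_over (RJ K a J) else conv_fps_over K (RJ K a J))"

text \<open>Fraction field of a subdomain of \<open>\<complex>[[t]]\<close>, realised inside \<open>\<complex>((t))\<close>.\<close>
definition Quot :: "complex fps set \<Rightarrow> complex fls set" where
  "Quot D = {fps_to_fls f / fps_to_fls g | f g. f \<in> D \<and> g \<in> D \<and> g \<noteq> 0}"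

definition Qi :: "complex set \<Rightarrow> ('i \<Rightarrow> complex) \<Rightarrow> 'i \<Rightarrow> 'i set \<Rightarrow> 'i \<Rightarrow> complex fls set" where
  "Qi K a i1 I i = Quot (DJ K a i1 (I - {i}))"

definition Qi' :: "complex set \<Rightarrow> ('i \<Rightarrow> complex) \<Rightarrow> 'i \<Rightarrow> 'i set \<Rightarrow> 'i \<Rightarrow> complex fls set" where
  "Qi' K a i1 I i = (\<Inter>j\<in>I - {i}. Qi K a i1 I j)"

definition t_abs :: "complex fps \<Rightarrow> real" where
  "t_abs f = (if f = 0 then 0 else exp (- real (subdegree f)))"

definition t_abs_mat :: "complex fps mat \<Rightarrow> real" where
  "t_abs_mat M = Max (insert 0 (t_abs ` elements_mat M))"

definition GL :: "nat \<Rightarrow> complex fls set \<Rightarrow> complex fls mat set" where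
  "GL n S = {A \<in> carrier_mat n n. elements_mat A \<subseteq> S \<and>
     (\<exists>B \<in> carrier_mat n n. elements_mat B \<subseteq> S \<and> A * B = 1\<^sub>m n \<and> B * A = 1\<^sub>m n)}"

end

theory Submission
  imports Defs "Jordan_Normal_Form.Char_Poly" "HOL-Real_Asymp.Real_Asymp"
begin

text \<open>
  Split \<open>I = A \<union> B\<close> with \<open>A = {i}\<close>. Since \<open>a\<^sub>A\<close> and \<open>a\<^sub>B\<close> are comaximal, partial
  fractions write every \<open>c \<in> R\<^sub>I\<close> as \<open>x + y\<close> with \<open>x \<in> R\<^sub>A\<close>, \<open>y \<in> R\<^sub>B\<close>; because \<open>K / R\<close> is bounded
  for the house, one of the two summands can be chosen of house at most a constant \<open>C\<close>.
  Applying this coefficient by coefficient produces \<open>M \<equiv> \<one>\<close> over \<open>R\<^sub>A[[t]]\<close> such that \<open>M b\<close> lies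
  over \<open>R\<^sub>B[[t]]\<close>, and one of \<open>M\<close>, \<open>M b\<close> has bounded coefficients, hence convergent entries.
  Both matrices are \<open>\<equiv> \<one> (mod t)\<close>, hence invertible over the relevant fraction fields via the
  adjugate, and \<open>b = M\<^sup>-\<^sup>1 (M b)\<close>. For \<open>i \<noteq> 1\<close> the bounded factor is \<open>M\<close>, for \<open>i = 1\<close> it is \<open>M b\<close>.
\<close>

section \<open>Subrings\<close>

definition is_subring :: "'a :: comm_ring_1 set \<Rightarrow> bool" where
  "is_subring S \<longleftrightarrow> 0 \<in> S \<and> 1 \<in> S \<and> (\<forall>x\<in>S. \<forall>y\<in>S. x + y \<in> S \<and> x * y \<in> S \<and> - x \<in> S)"

lemma is_subringI:
  "0 \<in> S \<Longrightarrow> 1 \<in> S \<Longrightarrow> (\<And>x y. x \<in> S \<Longrightarrow> y \<in> S \<Longrightarrow> x + y \<in> S) \<Longrightarrow>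
   (\<And>x y. x \<in> S \<Longrightarrow> y \<in> S \<Longrightarrow> x * y \<in> S) \<Longrightarrow> (\<And>x. x \<in> S \<Longrightarrow> - x \<in> S) \<Longrightarrow> is_subring S"
  unfolding is_subring_def by blast

context
  fixes S :: "'a :: comm_ring_1 set"
  assumes S: "is_subring S"
begin

lemma subring_0: "0 \<in> S" and subring_1: "1 \<in> S"
  using S unfolding is_subring_def by blast+

lemma subring_add: "x \<in> S \<Longrightarrow> y \<in> S \<Longrightarrow> x + y \<in> S"
  and subring_mult: "x \<in> S \<Longrightarrow> y \<in> S \<Longrightarrow> x * y \<in> S"
  and subring_uminus: "x \<in> S \<Longrightarrow> - x \<in> S"
  using S unfolding is_subring_def by blast+

lemma subring_diff: "x \<in> S \<Longrightarrow> y \<in> S \<Longrightarrow> x - y \<in> S"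
  using subring_add subring_uminus by (metis diff_conv_add_uminus)

lemma subring_sum: "(\<And>s. s \<in> A \<Longrightarrow> f s \<in> S) \<Longrightarrow> sum f A \<in> S"
  by (induction A rule: infinite_finite_induct) (auto intro: subring_0 subring_add)

lemma subring_prod: "(\<And>s. s \<in> A \<Longrightarrow> f s \<in> S) \<Longrightarrow> prod f A \<in> S"
  by (induction A rule: infinite_finite_induct) (auto intro: subring_1 subring_mult)

lemma subring_power: "x \<in> S \<Longrightarrow> x ^ k \<in> S"
  by (induction k) (auto intro: subring_1 subring_mult)

lemma subring_of_nat: "of_nat k \<in> S"
  by (induction k) (auto intro: subring_0 subring_1 subring_add)

lemma subring_of_int: "of_int m \<in> S"
  by (cases m rule: int_cases) (auto intro: subring_of_nat subring_uminus simp del: of_nat_Suc)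

text \<open>Determinants and adjugates of matrices with entries in a subring stay in the subring
  (Leibniz formula); this is what makes the inverse of a unimodular matrix computable over it.\<close>

lemma subring_det:
  assumes A: "A \<in> carrier_mat n n" and e: "\<And>i j. i < n \<Longrightarrow> j < n \<Longrightarrow> A $$ (i,j) \<in> S"
  shows "det A \<in> S"
proof -
  have "det A = (\<Sum>p \<in> {p. p permutes {0..<n}}. signof p * (\<Prod>i = 0..<n. A $$ (i, p i)))"
    unfolding det_def using carrier_matD[OF A] by simp
  also have "\<dots> \<in> S"
  proof (intro subring_sum subring_mult subring_prod)
    fix p i assume p: "p \<in> {p. p permutes {0..<n}}" and i: "i \<in> {0..<n}"
    have "p i \<in> {0..<n}" using permutes_in_image[of p "{0..<n}" i] p i by simp
    thus "A $$ (i, p i) \<in> S" using i e by simp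
  next
    fix p :: "nat \<Rightarrow> nat" show "signof p \<in> S" by (rule subring_of_int)
  qed
  finally show ?thesis .
qed

lemma subring_adj:
  assumes A: "A \<in> carrier_mat n n" and e: "\<And>i j. i < n \<Longrightarrow> j < n \<Longrightarrow> A $$ (i,j) \<in> S"
    and ij: "i < n" "j < n"
  shows "adj_mat A $$ (i, j) \<in> S"
proof -
  have "adj_mat A $$ (i, j) = (-1)^(j+i) * det (mat_delete A j i)"
    using A ij unfolding adj_mat_def cofactor_def by simp
  also have "\<dots> \<in> S"
  proof (intro subring_mult subring_power subring_uminus subring_1 subring_det)
    show "mat_delete A j i \<in> carrier_mat (n - 1) (n - 1)" using A unfolding carrier_mat_def by simp
    fix i' j' assume ij': "i' < n - 1" "j' < n - 1"
    have "mat_delete A j i $$ (i', j') =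
       A $$ (if i' < j then i' else Suc i', if j' < i then j' else Suc j')"
      using A ij' unfolding mat_delete_def by simp
    also have "\<dots> \<in> S" using ij' by (intro e) auto
    finally show "mat_delete A j i $$ (i', j') \<in> S" .
  qed
  finally show ?thesis .
qed

end

lemma is_subring_Int: "is_subring S \<Longrightarrow> is_subring T \<Longrightarrow> is_subring (S \<inter> T)"
  unfolding is_subring_def by blast

lemma is_subring_fps_over:
  assumes S: "is_subring S" shows "is_subring (fps_over S)"
proof (rule is_subringI)
  show "f * g \<in> fps_over S" if "f \<in> fps_over S" "g \<in> fps_over S" for f g
  proof -
    have "(f * g) $ k \<in> S" for k
      using that unfolding fps_over_def fps_mult_nth by (auto intro!: subring_sum subring_mult S)
    thus ?thesis unfolding fps_over_def by simp
  qed
qed (use S in \<open>auto simp: fps_over_def intro: subring_0 subring_1 subring_add subring_uminus\<close>)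

lemma fps_over_mono: "S \<subseteq> S' \<Longrightarrow> fps_over S \<subseteq> fps_over S'"
  unfolding fps_over_def by auto

lemma localize_iff: "x \<in> localize S d \<longleftrightarrow> (\<exists>r k. r \<in> S \<and> x = r / d ^ k)"
  unfolding localize_def by blast

lemma localizeI: "r \<in> S \<Longrightarrow> r / d ^ k \<in> localize S d"
  unfolding localize_iff by blast

lemma subset_localize: "S \<subseteq> localize S d"
  using localizeI[where k = 0] by fastforce

lemma is_subring_localize:
  fixes S :: "complex set"
  assumes S: "is_subring S" and d: "d \<in> S" "d \<noteq> 0"
  shows "is_subring (localize S d)"
proof (rule is_subringI)
  fix x y assume "x \<in> localize S d" "y \<in> localize S d"
  then obtain r k s m where rs: "r \<in> S" "s \<in> S" "x = r / d ^ k" "y = s / d ^ m"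
    unfolding localize_iff by blast
  have "x + y = (r * d ^ m + s * d ^ k) / d ^ (k + m)"
    using d(2) unfolding rs(3,4) by (simp add: field_simps power_add)
  moreover have "r * d ^ m + s * d ^ k \<in> S"
    using rs d by (intro subring_add subring_mult subring_power S)
  ultimately show "x + y \<in> localize S d" by (simp add: localizeI)
  have "x * y = (r * s) / d ^ (k + m)" using rs by (simp add: power_add)
  moreover have "r * s \<in> S" using rs by (intro subring_mult S)
  ultimately show "x * y \<in> localize S d" by (simp add: localizeI)
  have "- x = (- r) / d ^ k" using rs by simp
  moreover have "- r \<in> S" using rs by (intro subring_uminus S)
  ultimately show "- x \<in> localize S d" by (metis localizeI)
qed (use subset_localize subring_0 subring_1 S in blast)+

lemma localize_mono:
  fixes S :: "complex set"
  assumes S: "is_subring S" and e: "e \<in> S" "e \<noteq> 0"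
  shows "localize S d \<subseteq> localize S (d * e)"
proof
  fix x assume "x \<in> localize S d"
  then obtain r k where r: "r \<in> S" "x = r / d ^ k" unfolding localize_iff by blast
  have "x = (r * e ^ k) / (d * e) ^ k" using r e by (simp add: power_mult_distrib)
  moreover have "r * e ^ k \<in> S" using r e by (intro subring_mult subring_power S)
  ultimately show "x \<in> localize S (d * e)" by (simp add: localizeI)
qed

section \<open>Algebraic integers form a ring\<close>

text \<open>The classical argument: a complex
  number that stabilises a finitely generated \<open>\<int>\<close>-module containing a nonzero element is an
  eigenvalue of an integer matrix, hence a root of its monic characteristic polynomial.\<close>

lemma algebraic_integer_iff: "algebraic_integer (x::complex) \<longleftrightarrow> algebraic_int x"
  unfolding algebraic_integer_def algebraic_int_altdef_ipoly by auto

definition int_span :: "complex set \<Rightarrow> complex set" where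
  "int_span G = {(\<Sum>h\<in>G. of_int (c h) * h) | c. True}"

lemma int_spanI: "z = (\<Sum>h\<in>G. of_int (c h) * h) \<Longrightarrow> z \<in> int_span G"
  unfolding int_span_def by blast

lemma int_span_0: "0 \<in> int_span G"
  by (rule int_spanI[where c = "\<lambda>_. 0"]) simp

lemma int_span_add: "z1 \<in> int_span G \<Longrightarrow> z2 \<in> int_span G \<Longrightarrow> z1 + z2 \<in> int_span G"
proof -
  assume "z1 \<in> int_span G" "z2 \<in> int_span G"
  then obtain c1 c2 where "z1 = (\<Sum>h\<in>G. of_int (c1 h) * h)" "z2 = (\<Sum>h\<in>G. of_int (c2 h) * h)"
    unfolding int_span_def by blast
  hence "z1 + z2 = (\<Sum>h\<in>G. of_int (c1 h + c2 h) * h)"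
    by (simp add: sum.distrib distrib_right)
  thus ?thesis by (rule int_spanI)
qed

lemma int_span_of_int_mult: "z \<in> int_span G \<Longrightarrow> of_int k * z \<in> int_span G"
proof -
  assume "z \<in> int_span G"
  then obtain c where "z = (\<Sum>h\<in>G. of_int (c h) * h)" unfolding int_span_def by blast
  hence "of_int k * z = (\<Sum>h\<in>G. of_int (k * c h) * h)"
    by (simp add: sum_distrib_left mult.assoc)
  thus ?thesis by (rule int_spanI)
qed

lemma int_span_generator:
  assumes "finite G" "g \<in> G" shows "g \<in> int_span G"
proof (rule int_spanI)
  have "(\<Sum>h\<in>G. of_int (if h = g then 1 else 0) * h) = (\<Sum>h\<in>G. if h = g then g else 0)"
    by (rule sum.cong) auto
  also have "\<dots> = g" using assms by simp
  finally show "g = (\<Sum>h\<in>G. of_int (if h = g then 1 else 0) * h)" by simp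
qed

lemma int_span_sum: "(\<And>s. s \<in> S \<Longrightarrow> f s \<in> int_span G) \<Longrightarrow> sum f S \<in> int_span G"
  by (induction S rule: infinite_finite_induct) (auto intro: int_span_add int_span_0)

lemma int_span_stable_mult:
  assumes stable: "\<And>g. g \<in> G \<Longrightarrow> x * g \<in> int_span G" and z: "z \<in> int_span G"
  shows "x * z \<in> int_span G"
proof -
  obtain c where "z = (\<Sum>h\<in>G. of_int (c h) * h)" using z unfolding int_span_def by blast
  hence "x * z = (\<Sum>h\<in>G. of_int (c h) * (x * h))"
    by (simp add: sum_distrib_left algebra_simps)
  also have "\<dots> \<in> int_span G" using stable by (intro int_span_sum int_span_of_int_mult)
  finally show ?thesis .
qed

lemma algebraic_int_if_stable_span:
  assumes G: "finite G" "g0 \<in> G" "g0 \<noteq> 0"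
    and stable: "\<And>g. g \<in> G \<Longrightarrow> \<theta> * g \<in> int_span G"
  shows "algebraic_int \<theta>"
proof -
  define n where "n = card G"
  obtain f where f: "bij_betw f {0..<n} G" using ex_bij_betw_nat_finite[OF G(1)] n_def by blast
  have "\<forall>g\<in>G. \<exists>c. \<theta> * g = (\<Sum>h\<in>G. of_int (c h) * h)" using stable unfolding int_span_def by blast
  then obtain C where C: "\<And>g. g \<in> G \<Longrightarrow> \<theta> * g = (\<Sum>h\<in>G. of_int (C g h) * h)" by metis
  define A :: "int mat" where "A = mat n n (\<lambda>(i,j). C (f i) (f j))"
  define v :: "complex vec" where "v = vec n f"
  have A: "A \<in> carrier_mat n n" unfolding A_def by simp
  have fi: "f i \<in> G" if "i < n" for i using f that unfolding bij_betw_def by auto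
  have Av: "map_mat of_int A *\<^sub>v v = \<theta> \<cdot>\<^sub>v v"
  proof (rule eq_vecI)
    fix i assume "i < dim_vec (\<theta> \<cdot>\<^sub>v v)"
    hence i: "i < n" by (simp add: v_def)
    have "(map_mat of_int A *\<^sub>v v) $ i = (\<Sum>j<n. of_int (C (f i) (f j)) * f j)"
      using i by (simp add: A_def v_def scalar_prod_def atLeast0LessThan mult_mat_vec_def)
    also have "\<dots> = (\<Sum>h\<in>G. of_int (C (f i) h) * h)"
      using sum.reindex_bij_betw[OF f, of "\<lambda>h. of_int (C (f i) h) * h"]
      by (simp add: atLeast0LessThan)
    also have "\<dots> = \<theta> * f i" using C[OF fi[OF i]] by simp
    finally show "(map_mat of_int A *\<^sub>v v) $ i = (\<theta> \<cdot>\<^sub>v v) $ i" using i by (simp add: v_def)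
  qed (simp add: A_def v_def)
  obtain j where j: "j < n" "f j = g0" using f G(2) unfolding bij_betw_def
    by (metis atLeastLessThan_iff imageE)
  have "v \<noteq> 0\<^sub>v n" using j G(3) unfolding v_def by (metis index_vec index_zero_vec(1))
  hence "eigenvalue (map_mat of_int A :: complex mat) \<theta>"
    unfolding eigenvalue_def eigenvector_def using Av A by (intro exI[of _ v]) (auto simp: v_def)
  hence "poly (char_poly (map_mat of_int A :: complex mat)) \<theta> = 0"
    using eigenvalue_root_char_poly[of "map_mat of_int A" n \<theta>] A by auto
  moreover have "char_poly (map_mat of_int A :: complex mat) = map_poly of_int (char_poly A)"
    by (rule of_int_hom.char_poly_hom[OF A])
  moreover have "lead_coeff (char_poly A) = 1" using degree_monic_char_poly[OF A] by simp
  ultimately show ?thesis unfolding algebraic_int_altdef_ipoly by auto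
qed

lemma algebraic_int_monic_relation:
  assumes "algebraic_int (x::complex)"
  obtains d c where "d > 0" "x ^ d = (\<Sum>j<d. of_int (c j) * x ^ j)"
proof -
  obtain p where p: "poly (map_poly of_int p) x = 0" "lead_coeff p = 1"
    using assms unfolding algebraic_int_altdef_ipoly by blast
  define d where "d = degree p"
  have "d > 0"
  proof (rule ccontr)
    assume "\<not> d > 0"
    hence "p = [:1:]" using p(2) unfolding d_def by (metis degree_0_id gr0I lead_coeff_pCons(1) pCons_0_0)
    thus False using p(1) by simp
  qed
  have "0 = (\<Sum>j\<le>d. of_int (coeff p j) * x ^ j)"
    using p(1) unfolding poly_altdef by (simp add: degree_map_poly coeff_map_poly d_def)
  also have "\<dots> = (\<Sum>j<d. of_int (coeff p j) * x ^ j) + x ^ d"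
    using p(2) by (simp add: lessThan_Suc_atMost[symmetric] d_def)
  finally have "x ^ d = (\<Sum>j<d. of_int (- coeff p j) * x ^ j)"
    by (simp add: sum_negf eq_neg_iff_add_eq_0 add.commute)
  with \<open>d > 0\<close> show ?thesis by (rule that)
qed

lemma monomial_span_stable:
  fixes x y :: complex
  assumes rel: "x ^ d = (\<Sum>j<d. of_int (c j) * x ^ j)"
    and G: "G = (\<lambda>(k,l). x ^ k * y ^ l) ` ({..<d} \<times> {..<e})" and g: "g \<in> G"
  shows "x * g \<in> int_span G"
proof -
  have mem: "x ^ k * y ^ l \<in> int_span G" if "k < d" "l < e" for k l
    using that unfolding G by (intro int_span_generator) auto
  obtain k l where kl: "k < d" "l < e" "g = x ^ k * y ^ l" using g unfolding G by auto
  have xg: "x * g = x ^ Suc k * y ^ l" using kl(3) by (simp add: mult.assoc)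
  show ?thesis
  proof (cases "Suc k < d")
    case True thus ?thesis unfolding xg by (rule mem[OF _ kl(2)])
  next
    case False
    hence "Suc k = d" using kl by simp
    hence "x * g = x ^ d * y ^ l" using xg by simp
    also have "\<dots> = (\<Sum>j<d. of_int (c j) * (x ^ j * y ^ l))"
      unfolding rel sum_distrib_right by (simp add: mult.assoc)
    also have "\<dots> \<in> int_span G" using mem kl by (intro int_span_sum int_span_of_int_mult) auto
    finally show ?thesis .
  qed
qed

lemma algebraic_int_common_span:
  assumes x: "algebraic_int (x::complex)" and y: "algebraic_int y"
  obtains G where "finite G" "1 \<in> G" "\<And>g. g \<in> G \<Longrightarrow> x * g \<in> int_span G"
    "\<And>g. g \<in> G \<Longrightarrow> y * g \<in> int_span G"
proof -
  obtain d c where d: "d > 0" "x ^ d = (\<Sum>j<d. of_int (c j) * x ^ j)"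
    using algebraic_int_monic_relation[OF x] .
  obtain e c' where e: "e > 0" "y ^ e = (\<Sum>j<e. of_int (c' j) * y ^ j)"
    using algebraic_int_monic_relation[OF y] .
  define G where "G = (\<lambda>(k,l). x ^ k * y ^ l) ` ({..<d} \<times> {..<e})"
  have G_swap: "G = (\<lambda>(l,k). y ^ l * x ^ k) ` ({..<e} \<times> {..<d})"
    unfolding G_def by (auto simp: mult.commute image_iff)
  show ?thesis
  proof (rule that)
    show "finite G" unfolding G_def by simp
    show "1 \<in> G" unfolding G_def using d e by (intro image_eqI[of _ _ "(0,0)"]) auto
  qed (use monomial_span_stable[OF d(2) G_def] monomial_span_stable[OF e(2) G_swap] in auto)
qed

lemma algebraic_int_add:
  assumes "algebraic_int (x::complex)" "algebraic_int y" shows "algebraic_int (x + y)"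
proof -
  obtain G where G: "finite G" "1 \<in> G" "\<And>g. g \<in> G \<Longrightarrow> x * g \<in> int_span G"
    "\<And>g. g \<in> G \<Longrightarrow> y * g \<in> int_span G" using algebraic_int_common_span[OF assms] by blast
  show ?thesis
    by (rule algebraic_int_if_stable_span[OF G(1,2)]) (auto simp: distrib_right intro: int_span_add G(3,4))
qed

lemma algebraic_int_mult:
  assumes "algebraic_int (x::complex)" "algebraic_int y" shows "algebraic_int (x * y)"
proof -
  obtain G where G: "finite G" "1 \<in> G" "\<And>g. g \<in> G \<Longrightarrow> x * g \<in> int_span G"
    "\<And>g. g \<in> G \<Longrightarrow> y * g \<in> int_span G" using algebraic_int_common_span[OF assms] by blast
  show ?thesis
    by (rule algebraic_int_if_stable_span[OF G(1,2)])
      (auto simp: mult.assoc intro: int_span_stable_mult[OF G(3)] G(4))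
qed

lemma is_subring_algebraic_int: "is_subring {x :: complex. algebraic_int x}"
  by (rule is_subringI) (auto intro: algebraic_int_add algebraic_int_mult)

section \<open>Number fields, embeddings and the house\<close>

context
  fixes K :: "complex set"
  assumes K: "subfield_C K"
begin

lemma is_subring_subfield: "is_subring K"
  using K unfolding subfield_C_def by (intro is_subringI) auto

lemma subfield_divide: "x \<in> K \<Longrightarrow> y \<in> K \<Longrightarrow> x / y \<in> K"
  using K unfolding subfield_C_def divide_inverse
  by (cases "y = 0") (auto intro: subring_mult[OF is_subring_subfield])

lemma subfield_of_rat: "of_rat q \<in> K"
  by (cases q) (auto simp: of_rat_rat intro: subfield_divide subring_of_int[OF is_subring_subfield])

end

context
  fixes K :: "complex set" and \<sigma> :: "complex \<Rightarrow> complex"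
  assumes K: "subfield_C K" and \<sigma>: "\<sigma> \<in> embeddings K"
begin

lemma emb_add: "x \<in> K \<Longrightarrow> y \<in> K \<Longrightarrow> \<sigma> (x + y) = \<sigma> x + \<sigma> y"
  and emb_mult: "x \<in> K \<Longrightarrow> y \<in> K \<Longrightarrow> \<sigma> (x * y) = \<sigma> x * \<sigma> y"
  and emb_1: "\<sigma> 1 = 1"
  and emb_outside: "x \<notin> K \<Longrightarrow> \<sigma> x = 0"
  using \<sigma> unfolding embeddings_def by auto

lemma emb_0: "\<sigma> 0 = 0"
  using emb_add[OF subring_0 subring_0, OF is_subring_subfield[OF K] is_subring_subfield[OF K]] by simp

lemma emb_uminus: "x \<in> K \<Longrightarrow> \<sigma> (- x) = - \<sigma> x"
  using emb_add[of x "- x"] emb_0 subring_uminus[OF is_subring_subfield[OF K]]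
  by (metis add.commute eq_neg_iff_add_eq_0 add.right_inverse)

lemma emb_sum: "(\<And>s. s \<in> S \<Longrightarrow> f s \<in> K) \<Longrightarrow> \<sigma> (sum f S) = (\<Sum>s\<in>S. \<sigma> (f s))"
  by (induction S rule: infinite_finite_induct)
    (auto simp: emb_0 emb_add subring_sum[OF is_subring_subfield[OF K]])

lemma emb_power: "x \<in> K \<Longrightarrow> \<sigma> (x ^ k) = \<sigma> x ^ k"
  by (induction k) (auto simp: emb_1 emb_mult subring_power[OF is_subring_subfield[OF K]])

lemma emb_of_int: "\<sigma> (of_int m) = of_int m"
proof -
  have "\<sigma> (of_nat k) = of_nat k" for k
    by (induction k) (auto simp: emb_0 emb_1 emb_add subring_of_nat[OF is_subring_subfield[OF K]]
        subring_1[OF is_subring_subfield[OF K]])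
  thus ?thesis
    by (cases m rule: int_cases)
      (auto simp: emb_uminus subring_of_nat[OF is_subring_subfield[OF K]] simp del: of_nat_Suc)
qed

lemma emb_of_rat: "\<sigma> (of_rat q) = of_rat q"
proof (cases q)
  case (Fract a b)
  have "of_rat q * of_int b = (of_int a :: complex)" using Fract by (simp add: of_rat_rat)
  hence "\<sigma> (of_rat q) * of_int b = of_int a"
    using emb_mult[OF subfield_of_rat[OF K] subring_of_int[OF is_subring_subfield[OF K]]]
    by (metis emb_of_int)
  thus ?thesis using Fract by (simp add: of_rat_rat field_simps)
qed

lemma emb_rat_combination:
  assumes "B \<subseteq> K"
  shows "\<sigma> (\<Sum>b\<in>B. of_rat (c b) * b) = (\<Sum>b\<in>B. of_rat (c b) * \<sigma> b)"
proof -
  have "of_rat (c b) * b \<in> K" if "b \<in> B" for b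
    using assms that by (intro subring_mult[OF is_subring_subfield[OF K]] subfield_of_rat[OF K]) auto
  hence "\<sigma> (\<Sum>b\<in>B. of_rat (c b) * b) = (\<Sum>b\<in>B. \<sigma> (of_rat (c b) * b))" by (rule emb_sum)
  also have "\<dots> = (\<Sum>b\<in>B. of_rat (c b) * \<sigma> b)"
    using assms by (intro sum.cong refl) (auto simp: emb_mult emb_of_rat subfield_of_rat[OF K])
  finally show ?thesis .
qed

lemma emb_int_poly:
  assumes z: "z \<in> K"
  shows "\<sigma> (poly (map_poly of_int p) z) = poly (map_poly of_int p) (\<sigma> z)"
proof -
  have terms: "of_int (coeff p i) * z ^ i \<in> K" for i
    by (intro subring_mult subring_of_int subring_power is_subring_subfield K z)
  have "\<sigma> (poly (map_poly of_int p) z) = \<sigma> (\<Sum>i\<le>degree p. of_int (coeff p i) * z ^ i)"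
    unfolding poly_altdef by (simp add: degree_map_poly coeff_map_poly)
  also have "\<dots> = (\<Sum>i\<le>degree p. of_int (coeff p i) * \<sigma> z ^ i)"
    using terms z by (simp add: emb_sum emb_mult emb_of_int emb_power
        subring_of_int[OF is_subring_subfield[OF K]] subring_power[OF is_subring_subfield[OF K]])
  also have "\<dots> = poly (map_poly of_int p) (\<sigma> z)"
    unfolding poly_altdef by (simp add: degree_map_poly coeff_map_poly)
  finally show ?thesis .
qed

end

text \<open>The inclusion \<open>K \<subseteq> \<complex>\<close> (extended by \<open>0\<close>) is an embedding, so there is at least one.\<close>

lemma subfield_id_embedding: "subfield_C K \<Longrightarrow> (\<lambda>z. if z \<in> K then z else 0) \<in> embeddings K"
  unfolding embeddings_def subfield_C_def by auto

lemma rat_common_denom: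
  assumes "finite (S :: rat set)"
  shows "\<exists>m::int. m > 0 \<and> (\<forall>q\<in>S. of_int m * q \<in> \<int>)"
  using assms
proof (induction S rule: finite_induct)
  case empty thus ?case by (intro exI[of _ 1]) simp
next
  case (insert q S)
  then obtain m where m: "m > 0" "\<forall>q\<in>S. of_int m * q \<in> \<int>" by blast
  obtain a b where ab: "quotient_of q = (a, b)" by (cases "quotient_of q")
  have b: "b > 0" using quotient_of_denom_pos[OF ab] .
  have "of_int (m * b) * q' \<in> \<int>" if "q' \<in> insert q S" for q'
  proof (cases "q' = q")
    case True
    hence "of_int (m * b) * q' = of_int (m * a)" using quotient_of_div[OF ab] b by (simp add: field_simps)
    thus ?thesis by (metis Ints_of_int)
  next
    case False
    hence "of_int b * (of_int m * q') \<in> \<int>" using that m by auto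
    thus ?thesis by (simp add: mult.assoc mult.left_commute)
  qed
  thus ?case using m b by (intro exI[of _ "m * b"]) simp
qed

context
  fixes K :: "complex set"
  assumes nf: "number_field K"
begin

lemma number_field_subfield: "subfield_C K"
  using nf unfolding number_field_def by auto

lemma number_field_basis:
  obtains B where "finite B" "B \<subseteq> K" "\<And>x. x \<in> K \<Longrightarrow> \<exists>c. x = (\<Sum>b\<in>B. of_rat (c b) * b)"
  using nf unfolding number_field_def by blast

text \<open>Every element of a number field has an integer multiple that is an algebraic integer:
  multiplication by \<open>x\<close> has a rational matrix on a spanning set, and a common denominator
  of its entries turns it into an integer matrix.\<close>

lemma algebraic_int_multiple:
  assumes x: "x \<in> K"
  obtains D :: int where "D > 0" "algebraic_int (of_int D * x)"
proof -
  note K = is_subring_subfield[OF number_field_subfield]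
  obtain B where B: "finite B" "B \<subseteq> K" "\<And>x. x \<in> K \<Longrightarrow> \<exists>c. x = (\<Sum>b\<in>B. of_rat (c b) * b)"
    using number_field_basis by blast
  have "\<forall>\<beta>\<in>B. \<exists>c. x * \<beta> = (\<Sum>b\<in>B. of_rat (c b) * b)"
    using B(2,3) x subring_mult[OF K] by blast
  then obtain C where C: "\<And>\<beta>. \<beta> \<in> B \<Longrightarrow> x * \<beta> = (\<Sum>b\<in>B. of_rat (C \<beta> b) * b)" by metis
  obtain m :: int where m: "m > 0" "\<And>q. q \<in> (\<lambda>(\<beta>,b). C \<beta> b) ` (B \<times> B) \<Longrightarrow> of_int m * q \<in> \<int>"
    using rat_common_denom[of "(\<lambda>(\<beta>,b). C \<beta> b) ` (B \<times> B)"] B(1) by blast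
  have int_entries: "of_int m * C \<beta> b = of_int \<lfloor>of_int m * C \<beta> b\<rfloor>" if "\<beta> \<in> B" "b \<in> B" for \<beta> b
    using m(2)[of "C \<beta> b"] that by (metis (no_types) Ints_cases floor_of_int mem_Sigma_iff
        case_prod_conv image_eqI)
  obtain g0 where g0: "g0 \<in> B" "g0 \<noteq> 0"
  proof (rule ccontr)
    assume "\<not> thesis"
    hence "\<And>g. g \<in> B \<Longrightarrow> g = 0" using that by blast
    moreover obtain c where "1 = (\<Sum>b\<in>B. of_rat (c b) * b)" using B(3)[OF subring_1[OF K]] by blast
    ultimately show False by (metis (no_types, lifting) mult_zero_right sum.neutral zero_neq_one)
  qed
  have "algebraic_int (of_int m * x)"
  proof (rule algebraic_int_if_stable_span[OF B(1) g0])
    fix \<beta> assume b: "\<beta> \<in> B"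
    have "of_int m * x * \<beta> = (\<Sum>b\<in>B. of_rat (of_int m * C \<beta> b) * b)"
      by (simp add: mult.assoc C[OF b] sum_distrib_left of_rat_mult)
    also have "\<dots> = (\<Sum>b\<in>B. of_int \<lfloor>of_int m * C \<beta> b\<rfloor> * b)"
      by (intro sum.cong refl) (metis b int_entries of_rat_of_int_eq)
    finally show "of_int m * x * \<beta> \<in> int_span B" by (rule int_spanI)
  qed
  with m(1) show ?thesis by (rule that)
qed

text \<open>An embedding sends \<open>\<beta> \<in> K\<close> to a root of a fixed nonzero polynomial (obtained from
  \<open>algebraic_int_multiple\<close>), and it is determined by its values on a spanning set.\<close>

lemma embedding_values_finite:
  assumes \<beta>: "\<beta> \<in> K"
  shows "finite ((\<lambda>\<sigma>. \<sigma> \<beta>) ` embeddings K)"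
proof -
  note K = number_field_subfield
  obtain D :: int where D: "D > 0" "algebraic_int (of_int D * \<beta>)"
    using algebraic_int_multiple[OF \<beta>] .
  then obtain p where p: "poly (map_poly of_int p) (of_int D * \<beta>) = 0" "lead_coeff p = 1"
    unfolding algebraic_int_altdef_ipoly by blast
  have "map_poly (of_int :: int \<Rightarrow> complex) p \<noteq> 0" using p(2) by auto
  hence roots: "finite {w. poly (map_poly (of_int :: int \<Rightarrow> complex) p) w = 0}"
    by (rule poly_roots_finite)
  have "\<sigma> \<beta> \<in> (\<lambda>w. w / of_int D) ` {w. poly (map_poly of_int p) w = 0}" if \<sigma>: "\<sigma> \<in> embeddings K" for \<sigma>
  proof -
    have DK: "of_int D * \<beta> \<in> K" by (intro subring_mult subring_of_int is_subring_subfield K \<beta>)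
    have "0 = \<sigma> (poly (map_poly of_int p) (of_int D * \<beta>))" using p(1) emb_0[OF K \<sigma>] by simp
    also have "\<dots> = poly (map_poly of_int p) (of_int D * \<sigma> \<beta>)"
      by (simp add: emb_int_poly[OF K \<sigma> DK] emb_mult[OF K \<sigma> subring_of_int[OF is_subring_subfield[OF K]] \<beta>]
          emb_of_int[OF K \<sigma>])
    finally show ?thesis using D(1) by (intro image_eqI[of _ _ "of_int D * \<sigma> \<beta>"]) auto
  qed
  hence "(\<lambda>\<sigma>. \<sigma> \<beta>) ` embeddings K \<subseteq> (\<lambda>w. w / of_int D) ` {w. poly (map_poly of_int p) w = 0}"
    by blast
  thus ?thesis using roots by (rule finite_subset[OF _ finite_imageI])
qed

lemma finite_embeddings: "finite (embeddings K)"
proof -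
  note K = number_field_subfield
  obtain B where B: "finite B" "B \<subseteq> K" "\<And>x. x \<in> K \<Longrightarrow> \<exists>c. x = (\<Sum>b\<in>B. of_rat (c b) * b)"
    using number_field_basis by blast
  define V where "V \<beta> = (\<lambda>\<sigma>. \<sigma> \<beta>) ` embeddings K" for \<beta>
  have "inj_on (\<lambda>\<sigma>. restrict \<sigma> B) (embeddings K)"
  proof (rule inj_onI)
    fix \<sigma> \<tau> assume \<sigma>: "\<sigma> \<in> embeddings K" and \<tau>: "\<tau> \<in> embeddings K"
      and eq: "restrict \<sigma> B = restrict \<tau> B"
    have "\<sigma> x = \<tau> x" for x
    proof (cases "x \<in> K")
      case True
      then obtain c where c: "x = (\<Sum>b\<in>B. of_rat (c b) * b)" using B(3) by blast
      have "\<sigma> b = \<tau> b" if "b \<in> B" for b using eq that by (metis restrict_apply')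
      thus ?thesis unfolding c emb_rat_combination[OF K \<sigma> B(2)] emb_rat_combination[OF K \<tau> B(2)]
        by simp
    qed (simp add: emb_outside[OF K \<sigma>] emb_outside[OF K \<tau>])
    thus "\<sigma> = \<tau>" ..
  qed
  moreover have "(\<lambda>\<sigma>. restrict \<sigma> B) ` embeddings K \<subseteq> (\<Pi>\<^sub>E \<beta>\<in>B. V \<beta>)"
    unfolding V_def by auto
  moreover have "finite (\<Pi>\<^sub>E \<beta>\<in>B. V \<beta>)"
    using B(1,2) embedding_values_finite unfolding V_def by (intro finite_PiE) auto
  ultimately show ?thesis by (rule inj_on_finite)
qed

end

text \<open>Since \<open>K\<close> has finitely many embeddings (and at least one), \<open>\<parallel>x\<parallel>\<close> is a maximum; it is
  subadditive and submultiplicative on \<open>K\<close>.\<close>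

lemma of_rat_complex: "(of_rat q :: complex) = of_real (of_rat q)"
  by (cases q) (simp add: of_rat_rat)

context
  fixes K :: "complex set"
  assumes nf: "number_field K"
begin

lemma house_ge: "\<sigma> \<in> embeddings K \<Longrightarrow> cmod (\<sigma> x) \<le> house K x"
  unfolding house_def using finite_embeddings[OF nf] by (intro Max_ge) auto

lemma house_le: "(\<And>\<sigma>. \<sigma> \<in> embeddings K \<Longrightarrow> cmod (\<sigma> x) \<le> c) \<Longrightarrow> house K x \<le> c"
  unfolding house_def
  using finite_embeddings[OF nf] subfield_id_embedding[OF number_field_subfield[OF nf]]
  by (subst Max_le_iff) auto

lemma house_nonneg: "0 \<le> house K x"
  using house_ge[OF subfield_id_embedding[OF number_field_subfield[OF nf]], of x] norm_ge_zero
  by (meson order_trans)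

lemma house_0: "house K 0 = 0"
  using house_nonneg[of 0] house_le[of 0 0] emb_0[OF number_field_subfield[OF nf]] by fastforce

lemma house_1: "house K 1 \<le> 1"
  by (rule house_le) (simp add: emb_1[OF number_field_subfield[OF nf]])

lemma house_add: "x \<in> K \<Longrightarrow> y \<in> K \<Longrightarrow> house K (x + y) \<le> house K x + house K y"
proof (rule house_le)
  fix \<sigma> assume \<sigma>: "\<sigma> \<in> embeddings K" and "x \<in> K" "y \<in> K"
  hence "cmod (\<sigma> (x + y)) = cmod (\<sigma> x + \<sigma> y)" by (simp add: emb_add[OF number_field_subfield[OF nf] \<sigma>])
  also have "\<dots> \<le> cmod (\<sigma> x) + cmod (\<sigma> y)" by (rule norm_triangle_ineq)
  also have "\<dots> \<le> house K x + house K y" using house_ge[OF \<sigma>] by (intro add_mono)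
  finally show "cmod (\<sigma> (x + y)) \<le> house K x + house K y" .
qed

lemma house_mult: "x \<in> K \<Longrightarrow> y \<in> K \<Longrightarrow> house K (x * y) \<le> house K x * house K y"
proof (rule house_le)
  fix \<sigma> assume \<sigma>: "\<sigma> \<in> embeddings K" and "x \<in> K" "y \<in> K"
  hence "cmod (\<sigma> (x * y)) = cmod (\<sigma> x) * cmod (\<sigma> y)"
    by (simp add: emb_mult[OF number_field_subfield[OF nf] \<sigma>] norm_mult)
  also have "\<dots> \<le> house K x * house K y" using house_ge[OF \<sigma>]
    by (intro mult_mono) (auto intro: house_nonneg)
  finally show "cmod (\<sigma> (x * y)) \<le> house K x * house K y" .
qed

lemma house_uminus: "x \<in> K \<Longrightarrow> house K (- x) = house K x"
proof -
  have le: "house K (- z) \<le> house K z" if "z \<in> K" for z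
  proof (rule house_le)
    fix \<sigma> assume \<sigma>: "\<sigma> \<in> embeddings K"
    thus "cmod (\<sigma> (- z)) \<le> house K z"
      using house_ge[OF \<sigma>, of z] that by (simp add: emb_uminus[OF number_field_subfield[OF nf] \<sigma>])
  qed
  assume "x \<in> K"
  moreover have "- x \<in> K"
    using \<open>x \<in> K\<close> by (rule subring_uminus[OF is_subring_subfield[OF number_field_subfield[OF nf]]])
  ultimately show ?thesis using le[of x] le[of "- x"] by simp
qed

lemma house_sum: "(\<And>s. s \<in> S \<Longrightarrow> f s \<in> K) \<Longrightarrow> house K (sum f S) \<le> (\<Sum>s\<in>S. house K (f s))"
proof (induction S rule: infinite_finite_induct)
  case (insert x F)
  have "house K (sum f (insert x F)) \<le> house K (f x) + house K (sum f F)"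
    using insert by (auto intro!: house_add subring_sum[OF is_subring_subfield[OF number_field_subfield[OF nf]]])
  also have "\<dots> \<le> house K (f x) + (\<Sum>s\<in>F. house K (f s))" using insert by auto
  finally show ?case using insert by simp
qed (auto simp: house_0)

lemma house_rat_mult: "x \<in> K \<Longrightarrow> \<bar>q\<bar> \<le> 1 \<Longrightarrow> house K (of_rat q * x) \<le> house K x"
proof (rule house_le)
  fix \<sigma> assume \<sigma>: "\<sigma> \<in> embeddings K" and x: "x \<in> K" and q: "\<bar>q\<bar> \<le> 1"
  note K = number_field_subfield[OF nf]
  have "\<sigma> (of_rat q * x) = of_rat q * \<sigma> x"
    using x by (simp add: emb_mult[OF K \<sigma>] emb_of_rat[OF K \<sigma>] subfield_of_rat[OF K])
  hence "cmod (\<sigma> (of_rat q * x)) = \<bar>real_of_rat q\<bar> * cmod (\<sigma> x)"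
    by (simp add: norm_mult of_rat_complex[of q])
  also have "\<dots> \<le> 1 * house K x"
  proof (rule mult_mono)
    show "\<bar>real_of_rat q\<bar> \<le> 1" using q by (metis abs_of_rat of_rat_1 of_rat_less_eq)
  qed (use house_ge[OF \<sigma>, of x] in auto)
  finally show "cmod (\<sigma> (of_rat q * x)) \<le> house K x" by simp
qed

lemma ring_of_integers_eq: "ring_of_integers K = K \<inter> {x. algebraic_int x}"
  unfolding ring_of_integers_def algebraic_integer_iff by auto

lemma is_subring_ring_of_integers: "is_subring (ring_of_integers K)"
  unfolding ring_of_integers_eq
  by (intro is_subring_Int is_subring_subfield number_field_subfield nf is_subring_algebraic_int)

lemma ring_of_integers_subset: "ring_of_integers K \<subseteq> K"
  unfolding ring_of_integers_eq by blast

text \<open>Write \<open>x = \<Sum> q\<^sub>\<beta> w\<^sub>\<beta>\<close> over integral spanning elements \<open>w\<^sub>\<beta>\<close> and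
  subtract the integer parts of the rational coefficients \<open>q\<^sub>\<beta>\<close>.\<close>

lemma bounded_remainder:
  obtains C where "C \<ge> 0" "\<And>x. x \<in> K \<Longrightarrow> \<exists>\<rho>\<in>ring_of_integers K. house K (x - \<rho>) \<le> C"
proof -
  note K = is_subring_subfield[OF number_field_subfield[OF nf]]
  note R = is_subring_ring_of_integers
  obtain B where B: "finite B" "B \<subseteq> K" "\<And>x. x \<in> K \<Longrightarrow> \<exists>c. x = (\<Sum>b\<in>B. of_rat (c b) * b)"
    using number_field_basis[OF nf] by blast
  have "\<forall>\<beta>\<in>B. \<exists>D::int. D > 0 \<and> algebraic_int (of_int D * \<beta>)"
    using algebraic_int_multiple[OF nf] B(2) by (metis subsetD)
  then obtain D where D: "\<And>\<beta>. \<beta> \<in> B \<Longrightarrow> D \<beta> > (0::int) \<and> algebraic_int (of_int (D \<beta>) * \<beta>)"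
    by metis
  define w where "w \<beta> = of_int (D \<beta>) * \<beta>" for \<beta>
  have wR: "w \<beta> \<in> ring_of_integers K" if "\<beta> \<in> B" for \<beta>
    using D[OF that] that B(2) unfolding w_def ring_of_integers_eq
    by (auto intro: subring_mult[OF K] subring_of_int[OF K])
  hence wK: "w \<beta> \<in> K" if "\<beta> \<in> B" for \<beta> using that ring_of_integers_subset by blast
  define C where "C = (\<Sum>\<beta>\<in>B. house K (w \<beta>))"
  have "\<exists>\<rho>\<in>ring_of_integers K. house K (x - \<rho>) \<le> C" if x: "x \<in> K" for x
  proof -
    obtain c where c: "x = (\<Sum>b\<in>B. of_rat (c b) * b)" using B(3)[OF x] by blast
    define q where "q \<beta> = c \<beta> / of_int (D \<beta>)" for \<beta>
    define \<rho> where "\<rho> = (\<Sum>\<beta>\<in>B. of_int \<lfloor>q \<beta>\<rfloor> * w \<beta>)"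
    have \<rho>R: "\<rho> \<in> ring_of_integers K"
      unfolding \<rho>_def using wR by (intro subring_sum[OF R] subring_mult[OF R] subring_of_int[OF R])
    have "x = (\<Sum>\<beta>\<in>B. of_rat (q \<beta>) * w \<beta>)" unfolding c
    proof (intro sum.cong refl)
      fix \<beta> assume "\<beta> \<in> B"
      hence "D \<beta> \<noteq> 0" using D by (metis less_irrefl)
      thus "of_rat (c \<beta>) * \<beta> = of_rat (q \<beta>) * w \<beta>"
        unfolding q_def w_def by (simp add: of_rat_divide)
    qed
    hence "x - \<rho> = (\<Sum>\<beta>\<in>B. of_rat (q \<beta> - of_int \<lfloor>q \<beta>\<rfloor>) * w \<beta>)"
      unfolding \<rho>_def by (simp add: sum_subtractf[symmetric] of_rat_diff left_diff_distrib)
    also have "house K \<dots> \<le> (\<Sum>\<beta>\<in>B. house K (of_rat (q \<beta> - of_int \<lfloor>q \<beta>\<rfloor>) * w \<beta>))"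
      using wK by (intro house_sum subring_mult[OF K] subfield_of_rat[OF number_field_subfield[OF nf]])
    also have "\<dots> \<le> C" unfolding C_def
      using wK floor_correct by (intro sum_mono house_rat_mult) (auto simp: abs_le_iff, linarith+)
    finally show ?thesis using \<rho>R by blast
  qed
  moreover have "C \<ge> 0" unfolding C_def by (intro sum_nonneg house_nonneg)
  ultimately show ?thesis using that by blast
qed

end

section \<open>Comaximal elements and partial fractions\<close>

definition comaximal :: "'a :: comm_ring_1 set \<Rightarrow> 'a \<Rightarrow> 'a \<Rightarrow> bool" where
  "comaximal R x y \<longleftrightarrow> (\<exists>u\<in>R. \<exists>v\<in>R. u * x + v * y = 1)"

lemma comaximal_sym: "comaximal R x y \<Longrightarrow> comaximal R y x"
  unfolding comaximal_def by (metis add.commute)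

context
  fixes R :: "'a :: comm_ring_1 set"
  assumes R: "is_subring R"
begin

lemma comaximal_mult:
  assumes "comaximal R x y" "comaximal R x z" "x \<in> R" "y \<in> R" "z \<in> R"
  shows "comaximal R x (y * z)"
proof -
  obtain u v u' v' where uv: "u \<in> R" "v \<in> R" "u' \<in> R" "v' \<in> R"
    "u * x + v * y = 1" "u' * x + v' * z = 1"
    using assms(1,2) unfolding comaximal_def by blast
  have "(u * x + v * y) * (u' * x + v' * z) = 1" using uv by simp
  hence "(u * u' * x + u * v' * z + v * y * u') * x + (v * v') * (y * z) = 1"
    by (simp add: algebra_simps)
  moreover have "u * u' * x + u * v' * z + v * y * u' \<in> R" "v * v' \<in> R"
    using uv assms by (auto intro!: subring_add[OF R] subring_mult[OF R])
  ultimately show ?thesis unfolding comaximal_def by blast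
qed

lemma comaximal_1: "comaximal R x 1"
  unfolding comaximal_def using subring_0[OF R] subring_1[OF R] by force

lemma comaximal_prod:
  assumes "x \<in> R" "\<And>b. b \<in> B \<Longrightarrow> f b \<in> R" "\<And>b. b \<in> B \<Longrightarrow> comaximal R x (f b)"
  shows "comaximal R x (prod f B)"
  using assms(2,3)
proof (induction B rule: infinite_finite_induct)
  case (insert b B)
  thus ?case using assms(1) by (auto intro!: comaximal_mult subring_prod[OF R])
qed (simp_all add: comaximal_1)

lemma comaximal_power:
  assumes "comaximal R x y" "x \<in> R" "y \<in> R"
  shows "comaximal R (x ^ m) (y ^ k)"
proof -
  have "comaximal R x (y ^ k)" using comaximal_prod[of x "{..<k}" "\<lambda>_. y"] assms by simp
  hence "comaximal R (y ^ k) (x ^ m)"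
    using comaximal_prod[of "y ^ k" "{..<m}" "\<lambda>_. x"] assms
    by (simp add: comaximal_sym subring_power[OF R])
  thus ?thesis by (rule comaximal_sym)
qed

end

text \<open>The setting of the theorem: pairwise comaximal nonzero integers \<open>a\<^sub>i\<close> of \<open>K\<close>, indexed by
  a finite set \<open>I\<close>.\<close>

locale comaximal_family =
  fixes K :: "complex set" and I :: "'i set" and a :: "'i \<Rightarrow> complex"
  assumes nf: "number_field K" and finite_I: "finite I"
    and a_int: "\<And>i. i \<in> I \<Longrightarrow> a i \<in> ring_of_integers K"
    and a_nz: "\<And>i. i \<in> I \<Longrightarrow> a i \<noteq> 0"
    and a_coprime: "\<And>i j. i \<in> I \<Longrightarrow> j \<in> I \<Longrightarrow> i \<noteq> j \<Longrightarrow>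
        (\<exists>x \<in> ring_of_integers K. \<exists>y \<in> ring_of_integers K. x * a i + y * a j = 1)"
begin

abbreviation R :: "complex set" where "R \<equiv> ring_of_integers K"

lemma aJ_in_R: "J \<subseteq> I \<Longrightarrow> aJ a J \<in> R"
  unfolding aJ_def using a_int by (intro subring_prod[OF is_subring_ring_of_integers[OF nf]]) auto

lemma aJ_nonzero: "J \<subseteq> I \<Longrightarrow> aJ a J \<noteq> 0"
  unfolding aJ_def using a_nz finite_I by (subst prod_zero_iff) (auto intro: finite_subset)

lemma aJ_union: "A \<subseteq> I \<Longrightarrow> B \<subseteq> I \<Longrightarrow> A \<inter> B = {} \<Longrightarrow> aJ a (A \<union> B) = aJ a A * aJ a B"
  unfolding aJ_def using finite_I by (intro prod.union_disjoint) (auto intro: finite_subset)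

lemma is_subring_RJ: "J \<subseteq> I \<Longrightarrow> is_subring (RJ K a J)"
  unfolding RJ_def by (intro is_subring_localize is_subring_ring_of_integers nf aJ_in_R aJ_nonzero)

lemma RJ_subset_K: "J \<subseteq> I \<Longrightarrow> RJ K a J \<subseteq> K"
  unfolding RJ_def localize_def
  using aJ_in_R ring_of_integers_subset[OF nf] number_field_subfield[OF nf]
  by (auto intro!: subfield_divide subring_power[OF is_subring_subfield])

lemma RJ_mono:
  assumes "A \<subseteq> J" "J \<subseteq> I" shows "RJ K a A \<subseteq> RJ K a J"
proof -
  have "aJ a J = aJ a A * aJ a (J - A)"
    using aJ_union[of A "J - A"] assms by (metis Diff_disjoint Diff_partition Diff_subset order_trans)
  moreover have "J - A \<subseteq> I" using assms by blast
  hence "aJ a (J - A) \<in> R" "aJ a (J - A) \<noteq> 0" by (rule aJ_in_R, rule aJ_nonzero)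
  ultimately show ?thesis unfolding RJ_def
    using localize_mono[OF is_subring_ring_of_integers[OF nf]] by simp
qed

lemma comaximal_aJ:
  assumes "A \<subseteq> I" "B \<subseteq> I" "A \<inter> B = {}"
  shows "comaximal R (aJ a A) (aJ a B)"
proof -
  note Rs = is_subring_ring_of_integers[OF nf]
  have "comaximal R (a j) (aJ a A)" if "j \<in> B" for j
    unfolding aJ_def
  proof (rule comaximal_prod[OF Rs])
    fix i assume "i \<in> A"
    thus "comaximal R (a j) (a i)"
      using a_coprime[of j i] that assms unfolding comaximal_def by blast
  qed (use that assms a_int in auto)
  hence "comaximal R (aJ a A) (a j)" if "j \<in> B" for j using that comaximal_sym by blast
  thus ?thesis unfolding aJ_def using assms a_int aJ_in_R[OF assms(1)]
    by (intro comaximal_prod[OF Rs]) (auto simp: aJ_def)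
qed

text \<open>From \<open>u a\<^sub>A\<^sup>k + v a\<^sub>B\<^sup>k = 1\<close>
  one gets \<open>r / a\<^sub>I\<^sup>k = rv / a\<^sub>A\<^sup>k + ru / a\<^sub>B\<^sup>k\<close>; then an integer \<open>\<rho>\<close> is moved from the first
  summand to the second.\<close>

lemma partial_fractions:
  assumes rem: "\<And>x. x \<in> K \<Longrightarrow> \<exists>\<rho>\<in>R. house K (x - \<rho>) \<le> C"
    and AB: "A \<subseteq> I" "B \<subseteq> I" "A \<inter> B = {}" "A \<union> B = I"
    and c: "c \<in> RJ K a I"
  obtains x y where "x \<in> RJ K a A" "y \<in> RJ K a B" "c = x + y" "house K x \<le> C"
proof -
  note Rs = is_subring_ring_of_integers[OF nf]
  obtain r k where r: "r \<in> R" "c = r / aJ a I ^ k" using c unfolding RJ_def localize_iff by blast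
  define \<alpha> where "\<alpha> = aJ a A"
  define \<beta> where "\<beta> = aJ a B"
  have I_eq: "aJ a I = \<alpha> * \<beta>" unfolding \<alpha>_def \<beta>_def using aJ_union[OF AB(1-3)] AB(4) by simp
  have nz: "\<alpha> \<noteq> 0" "\<beta> \<noteq> 0" unfolding \<alpha>_def \<beta>_def using aJ_nonzero AB by auto
  have inR: "\<alpha> \<in> R" "\<beta> \<in> R" unfolding \<alpha>_def \<beta>_def using aJ_in_R AB by auto
  obtain u v where uv: "u \<in> R" "v \<in> R" "u * \<alpha> ^ k + v * \<beta> ^ k = 1"
    using comaximal_power[OF Rs comaximal_aJ[OF AB(1-3)] inR[unfolded \<alpha>_def \<beta>_def], of k k]
    unfolding comaximal_def \<alpha>_def \<beta>_def by blast
  have "c = r * (u * \<alpha> ^ k + v * \<beta> ^ k) / (\<alpha> ^ k * \<beta> ^ k)"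
    using uv(3) r(2) I_eq by (simp add: power_mult_distrib)
  also have "\<dots> = r * v / \<alpha> ^ k + r * u / \<beta> ^ k" using nz by (simp add: field_simps)
  finally have split: "c = r * v / \<alpha> ^ k + r * u / \<beta> ^ k" .
  have "r * v / \<alpha> ^ k \<in> K"
    using r uv inR ring_of_integers_subset[OF nf] number_field_subfield[OF nf]
    by (auto intro!: subfield_divide subring_mult[OF is_subring_subfield] subring_power[OF is_subring_subfield])
  then obtain \<rho> where \<rho>: "\<rho> \<in> R" "house K (r * v / \<alpha> ^ k - \<rho>) \<le> C" using rem by blast
  have "r * v / \<alpha> ^ k - \<rho> = (r * v - \<rho> * \<alpha> ^ k) / \<alpha> ^ k" using nz by (simp add: field_simps)
  moreover have "r * v - \<rho> * \<alpha> ^ k \<in> R"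
    using r uv \<rho> inR by (intro subring_diff[OF Rs] subring_mult[OF Rs] subring_power[OF Rs])
  ultimately have x: "r * v / \<alpha> ^ k - \<rho> \<in> RJ K a A" unfolding RJ_def \<alpha>_def by (simp add: localizeI)
  have "r * u / \<beta> ^ k + \<rho> = (r * u + \<rho> * \<beta> ^ k) / \<beta> ^ k" using nz by (simp add: field_simps)
  moreover have "r * u + \<rho> * \<beta> ^ k \<in> R"
    using r uv \<rho> inR by (intro subring_add[OF Rs] subring_mult[OF Rs] subring_power[OF Rs])
  ultimately have y: "r * u / \<beta> ^ k + \<rho> \<in> RJ K a B" unfolding RJ_def \<beta>_def by (simp add: localizeI)
  show ?thesis by (rule that[OF x y _ \<rho>(2)]) (simp add: split)
qed

end

section \<open>Power series with polynomially bounded coefficients\<close>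

text \<open>They lie in
  \<open>S{t}\<close> since \<open>(C (k+1)^d)^(1/k) \<rightarrow> 1\<close>, and, unlike \<open>S{t}\<close> with its \<open>limsup\<close> condition, they
  are easily seen to form a subring; this is what the adjugate construction of inverses needs.\<close>

definition poly_bounded_fps :: "complex set \<Rightarrow> complex set \<Rightarrow> complex fps set" where
  "poly_bounded_fps K S = {f \<in> fps_over S.
     \<exists>C d. C \<ge> 0 \<and> (\<forall>k. house K (f $ k) \<le> C * (real k + 1) ^ d)}"

lemma poly_bounded_fpsI:
  fixes f :: "complex fps"
  shows "f \<in> fps_over S \<Longrightarrow> C \<ge> 0 \<Longrightarrow> (\<And>k. house K (f $ k) \<le> C * (real k + 1) ^ d) \<Longrightarrow>
   f \<in> poly_bounded_fps K S"
  unfolding poly_bounded_fps_def by blast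

lemma poly_bounded_fpsE:
  fixes f :: "complex fps"
  assumes "f \<in> poly_bounded_fps K S"
  obtains C d where "f \<in> fps_over S" "C \<ge> 0" "\<And>k. house K (f $ k) \<le> C * (real k + 1) ^ d"
  using assms unfolding poly_bounded_fps_def by blast

lemma limsup_root_poly_bound:
  fixes h :: "nat \<Rightarrow> real"
  assumes h: "\<And>k. 0 \<le> h k" "\<And>k. h k \<le> C * (real k + 1) ^ d"
  shows "limsup (\<lambda>n. ereal (h n powr (1 / real n))) \<le> 1"
proof -
  define u where "u n = ((\<bar>C\<bar> + 1) * (real n + 1) ^ d) powr (1 / real n)" for n
  have "u \<longlonglongrightarrow> 1" unfolding u_def by real_asymp
  hence "limsup (\<lambda>n. ereal (u n)) = ereal 1"
    by (intro lim_imp_Limsup) (simp_all only: lim_ereal trivial_limit_sequentially not_False_eq_True)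
  moreover have "eventually (\<lambda>n. ereal (h n powr (1 / real n)) \<le> ereal (u n)) sequentially"
  proof (rule always_eventually, rule allI)
    fix n
    have "C * (real n + 1) ^ d \<le> (\<bar>C\<bar> + 1) * (real n + 1) ^ d" by (intro mult_right_mono) auto
    hence "h n \<le> (\<bar>C\<bar> + 1) * (real n + 1) ^ d" using h(2)[of n] by linarith
    thus "ereal (h n powr (1 / real n)) \<le> ereal (u n)"
      unfolding u_def by (simp add: powr_mono2 h(1))
  qed
  hence "limsup (\<lambda>n. ereal (h n powr (1 / real n))) \<le> limsup (\<lambda>n. ereal (u n))"
    by (rule Limsup_mono)
  ultimately show ?thesis by (simp add: one_ereal_def)
qed

lemma poly_bounded_subset_conv:
  "number_field K \<Longrightarrow> poly_bounded_fps K S \<subseteq> conv_fps_over K S"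
  unfolding conv_fps_over_def
  by (auto elim!: poly_bounded_fpsE intro!: limsup_root_poly_bound house_nonneg)

lemma house_coeff_add_bound:
  fixes f g :: "complex fps"
  assumes K: "number_field K" and fg: "f $ k \<in> K" "g $ k \<in> K"
    and f: "C1 \<ge> 0" "house K (f $ k) \<le> C1 * (real k + 1) ^ d1"
    and g: "C2 \<ge> 0" "house K (g $ k) \<le> C2 * (real k + 1) ^ d2"
  shows "house K ((f + g) $ k) \<le> (C1 + C2) * (real k + 1) ^ (d1 + d2)"
proof -
  have "(real k + 1) ^ d1 \<le> (real k + 1) ^ (d1 + d2)" "(real k + 1) ^ d2 \<le> (real k + 1) ^ (d1 + d2)"
    by (intro power_increasing; simp)+
  hence "C1 * (real k + 1) ^ d1 + C2 * (real k + 1) ^ d2 \<le> (C1 + C2) * (real k + 1) ^ (d1 + d2)"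
    using f(1) g(1) by (simp add: distrib_right add_mono mult_left_mono)
  thus ?thesis using house_add[OF K fg] f(2) g(2) by simp
qed

lemma house_coeff_mult_bound:
  fixes f g :: "complex fps"
  assumes K: "number_field K" and fK: "\<And>i. f $ i \<in> K" and gK: "\<And>i. g $ i \<in> K"
    and f: "C1 \<ge> 0" "\<And>i. house K (f $ i) \<le> C1 * (real i + 1) ^ d1"
    and g: "C2 \<ge> 0" "\<And>i. house K (g $ i) \<le> C2 * (real i + 1) ^ d2"
  shows "house K ((f * g) $ k) \<le> (C1 * C2) * (real k + 1) ^ (d1 + d2 + 1)"
proof -
  note Ks = is_subring_subfield[OF number_field_subfield[OF K]]
  have term_bound: "house K (f $ i * g $ (k - i)) \<le> (C1 * C2) * (real k + 1) ^ (d1 + d2)"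
    if i: "i \<in> {0..k}" for i
  proof -
    have mono: "(real j + 1) ^ d \<le> (real k + 1) ^ d" if "j \<le> k" for j d
      using that by (intro power_mono) auto
    have "house K (f $ i) \<le> C1 * (real k + 1) ^ d1"
      using f(2)[of i] mult_left_mono[OF mono[of i d1] f(1)] i by auto
    moreover have "house K (g $ (k - i)) \<le> C2 * (real k + 1) ^ d2"
      using g(2)[of "k - i"] mult_left_mono[OF mono[of "k - i" d2] g(1)] by auto
    ultimately have "house K (f $ i) * house K (g $ (k - i)) \<le>
        (C1 * (real k + 1) ^ d1) * (C2 * (real k + 1) ^ d2)"
      using f(1) by (intro mult_mono) (auto intro: house_nonneg[OF K])
    thus ?thesis using house_mult[OF K fK gK, of i "k - i"] by (simp add: power_add mult_ac)
  qed
  have "house K ((f * g) $ k) \<le> (\<Sum>i=0..k. house K (f $ i * g $ (k - i)))"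
    unfolding fps_mult_nth using fK gK by (intro house_sum[OF K] subring_mult[OF Ks])
  also have "\<dots> \<le> (\<Sum>i=0..k. (C1 * C2) * (real k + 1) ^ (d1 + d2))"
    by (rule sum_mono) (rule term_bound)
  also have "\<dots> = (C1 * C2) * (real k + 1) ^ (d1 + d2 + 1)" by simp
  finally show ?thesis .
qed

lemma is_subring_poly_bounded_fps:
  assumes K: "number_field K" and S: "is_subring S" and SK: "S \<subseteq> K"
  shows "is_subring (poly_bounded_fps K S)"
proof (rule is_subringI)
  note FS = is_subring_fps_over[OF S]
  have coeffK: "f $ k \<in> K" if "f \<in> fps_over S" for f :: "complex fps" and k using that SK unfolding fps_over_def by auto
  show "0 \<in> poly_bounded_fps K S"
    by (rule poly_bounded_fpsI[where C = 0 and d = 0]) (simp_all add: subring_0[OF FS] house_0[OF K])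
  show "1 \<in> poly_bounded_fps K S"
    by (rule poly_bounded_fpsI[where C = 1 and d = 0])
      (auto simp: subring_1[OF FS] house_0[OF K] house_1[OF K] fps_one_nth)
  fix f g assume "f \<in> poly_bounded_fps K S" "g \<in> poly_bounded_fps K S"
  then obtain C1 d1 C2 d2 where f: "f \<in> fps_over S" "C1 \<ge> 0" "\<And>k. house K (f $ k) \<le> C1 * (real k + 1) ^ d1"
    and g: "g \<in> fps_over S" "C2 \<ge> 0" "\<And>k. house K (g $ k) \<le> C2 * (real k + 1) ^ d2"
    by (elim poly_bounded_fpsE) blast
  show "f + g \<in> poly_bounded_fps K S"
    using f g by (intro poly_bounded_fpsI[where C = "C1 + C2" and d = "d1 + d2"]
        subring_add[OF FS] house_coeff_add_bound[OF K] coeffK) auto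
  show "f * g \<in> poly_bounded_fps K S"
    using f g by (intro poly_bounded_fpsI[where C = "C1 * C2" and d = "d1 + d2 + 1"]
        subring_mult[OF FS] house_coeff_mult_bound[OF K] coeffK) auto
  show "- f \<in> poly_bounded_fps K S"
    using f by (intro poly_bounded_fpsI[where C = C1 and d = d1] subring_uminus[OF FS])
      (auto simp: house_uminus[OF K coeffK])
qed

lemma poly_bounded_fps_if_bounded:
  fixes f :: "complex fps"
  assumes "f \<in> fps_over S" "\<And>k. house K (f $ k) \<le> C"
  shows "f \<in> poly_bounded_fps K S"
  using assms by (intro poly_bounded_fpsI[where C = "max C 0" and d = 0]) (simp_all add: le_max_iff_disj)

section \<open>Matrices over power series that are congruent to \<open>\<one>\<close> modulo \<open>t\<close>\<close>

definition congruent_one_mod_t :: "nat \<Rightarrow> complex fps mat \<Rightarrow> bool" where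
  "congruent_one_mod_t n A \<longleftrightarrow> (\<forall>p<n. \<forall>q<n. A $$ (p,q) $ 0 = (if p = q then 1 else 0))"

lemma congruent_one_mod_t_if_t_abs:
  assumes b: "b \<in> carrier_mat n n" and close: "t_abs_mat (b - 1\<^sub>m n) < 1"
  shows "congruent_one_mod_t n b"
  unfolding congruent_one_mod_t_def
proof (intro allI impI)
  fix p q assume pq: "p < n" "q < n"
  define f where "f = (b - 1\<^sub>m n) $$ (p,q)"
  have "f \<in> elements_mat (b - 1\<^sub>m n)"
    unfolding f_def using b pq by (intro elements_matI[of "b - 1\<^sub>m n" n n p q]) auto
  hence "t_abs f \<le> t_abs_mat (b - 1\<^sub>m n)" unfolding t_abs_mat_def
    by (intro Max_ge) (auto simp: elements_mat_def)
  hence small: "t_abs f < 1" using close by simp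
  have "f $ 0 = 0"
  proof (cases "f = 0")
    case False
    hence "exp (- real (subdegree f)) < 1" using small unfolding t_abs_def by simp
    hence "subdegree f > 0" by (cases "subdegree f = 0") auto
    thus ?thesis by auto
  qed simp
  moreover have "f = b $$ (p,q) - 1\<^sub>m n $$ (p,q)" unfolding f_def
    by (rule index_minus_mat(1)) (simp_all add: pq)
  moreover have "1\<^sub>m n $$ (p,q) = (if p = q then (1::complex fps) else 0)" by (rule index_one_mat(1)[OF pq])
  ultimately show "b $$ (p,q) $ 0 = (if p = q then 1 else 0)" by (cases "p = q") simp_all
qed

interpretation fps_to_fls_hom: comm_ring_hom "fps_to_fls :: complex fps \<Rightarrow> complex fls"
  by unfold_locales (simp_all add: fls_times_fps_to_fls)

interpretation fps_const_term_hom: comm_ring_hom "\<lambda>f :: complex fps. f $ 0"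
  by unfold_locales (simp_all add: fps_mult_nth)

text \<open>Reduction mod \<open>t\<close> is a ring homomorphism, so \<open>det A \<equiv> det \<one> = 1\<close> and \<open>det A \<noteq> 0\<close>.\<close>

lemma det_nonzero_if_congruent_one:
  assumes A: "A \<in> carrier_mat n n" and A1: "congruent_one_mod_t n A"
  shows "det A \<noteq> 0"
proof -
  have "map_mat (\<lambda>f. f $ 0) A = 1\<^sub>m n"
    using A A1 unfolding congruent_one_mod_t_def by (intro eq_matI) auto
  hence "det (map_mat (\<lambda>f. f $ 0) A) = 1" by simp
  hence "det A $ 0 = 1" by (simp add: fps_const_term_hom.hom_det)
  thus ?thesis by auto
qed

lemma Quot_mono: "P \<subseteq> D \<Longrightarrow> Quot P \<subseteq> Quot D"
  unfolding Quot_def by blast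

lemma GL_mono: "S \<subseteq> T \<Longrightarrow> GL n S \<subseteq> GL n T"
  unfolding GL_def by blast

lemma GL_inverse:
  assumes "A \<in> GL n S"
  obtains B where "B \<in> GL n S" "B * A = 1\<^sub>m n"
  using assms unfolding GL_def by blast

text \<open>A matrix \<open>A \<equiv> \<one> (mod t)\<close> with entries in a subring \<open>P\<close> is invertible over \<open>Quot P\<close>:
  its determinant is a unit of \<open>\<complex>[[t]]\<close>, and \<open>A\<^sup>-\<^sup>1 = adj A / det A\<close> has entries in \<open>Quot P\<close>.\<close>

lemma GL_Quot_if_congruent_one:
  fixes A :: "complex fps mat"
  assumes A: "A \<in> carrier_mat n n" "congruent_one_mod_t n A"
    and P: "is_subring P" and AP: "\<And>p q. p < n \<Longrightarrow> q < n \<Longrightarrow> A $$ (p,q) \<in> P"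
  shows "map_mat fps_to_fls A \<in> GL n (Quot P)"
proof -
  define d where "d = fps_to_fls (det A)"
  define Ai where "Ai = inverse d \<cdot>\<^sub>m map_mat fps_to_fls (adj_mat A)"
  have det_nz: "det A \<noteq> 0" by (rule det_nonzero_if_congruent_one[OF A])
  hence "d \<noteq> 0" unfolding d_def by simp
  have adj: "adj_mat A \<in> carrier_mat n n" "A * adj_mat A = det A \<cdot>\<^sub>m 1\<^sub>m n" "adj_mat A * A = det A \<cdot>\<^sub>m 1\<^sub>m n"
    using adj_mat[OF A(1)] by auto
  have scalar: "map_mat fps_to_fls (det A \<cdot>\<^sub>m 1\<^sub>m n) = d \<cdot>\<^sub>m 1\<^sub>m n"
    unfolding d_def by (intro eq_matI) auto
  have cancel: "inverse d \<cdot>\<^sub>m (d \<cdot>\<^sub>m 1\<^sub>m n) = 1\<^sub>m n" using \<open>d \<noteq> 0\<close> by (intro eq_matI) auto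
  have mA: "map_mat fps_to_fls A \<in> carrier_mat n n" and madj: "map_mat fps_to_fls (adj_mat A) \<in> carrier_mat n n"
    using A(1) adj(1) by simp_all
  have right: "map_mat fps_to_fls A * Ai = 1\<^sub>m n"
    unfolding Ai_def mult_smult_distrib[OF mA madj]
    using fps_to_fls_hom.mat_hom_mult[OF A(1) adj(1)] adj(2) scalar cancel by simp
  have left: "Ai * map_mat fps_to_fls A = 1\<^sub>m n"
    unfolding Ai_def mult_smult_assoc_mat[OF madj mA]
    using fps_to_fls_hom.mat_hom_mult[OF adj(1) A(1)] adj(3) scalar cancel by simp
  have detP: "det A \<in> P" by (rule subring_det[OF P A(1) AP])
  have "elements_mat Ai \<subseteq> Quot P"
  proof
    fix z assume "z \<in> elements_mat Ai"
    then obtain i j where ij: "i < n" "j < n" "z = Ai $$ (i,j)" using adj(1) unfolding Ai_def by auto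
    hence "z = fps_to_fls (adj_mat A $$ (i,j)) / fps_to_fls (det A)"
      using adj(1) unfolding Ai_def d_def by (simp add: divide_inverse mult.commute)
    thus "z \<in> Quot P" unfolding Quot_def using subring_adj[OF P A(1) AP ij(1,2)] detP det_nz by blast
  qed
  moreover have "elements_mat (map_mat fps_to_fls A) \<subseteq> Quot P"
  proof
    fix z assume "z \<in> elements_mat (map_mat fps_to_fls A)"
    then obtain i j where ij: "i < n" "j < n" "z = fps_to_fls (A $$ (i,j)) / fps_to_fls 1" using A(1) by auto
    thus "z \<in> Quot P" unfolding Quot_def using AP[OF ij(1,2)] subring_1[OF P] by fastforce
  qed
  moreover have "Ai \<in> carrier_mat n n" unfolding Ai_def using adj(1) by simp
  ultimately show ?thesis unfolding GL_def using mA left right by blast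
qed

text \<open>If \<open>M \<equiv> \<one>\<close> has entries in \<open>P\<^sub>1\<close> and \<open>M b \<equiv> \<one>\<close> has entries in \<open>P\<^sub>2\<close>, then
  \<open>b = M\<^sup>-\<^sup>1 \<cdot> (M b)\<close> is the required kind of factorisation.\<close>

lemma factorization_from_multiplier:
  fixes b M :: "complex fps mat"
  assumes b: "b \<in> carrier_mat n n" and M: "M \<in> carrier_mat n n"
    and M1: "congruent_one_mod_t n M" and N1: "congruent_one_mod_t n (M * b)"
    and P1: "is_subring P1" and MP: "\<And>p q. p < n \<Longrightarrow> q < n \<Longrightarrow> M $$ (p,q) \<in> P1"
    and P2: "is_subring P2" and NP: "\<And>p q. p < n \<Longrightarrow> q < n \<Longrightarrow> (M * b) $$ (p,q) \<in> P2"
  shows "\<exists>b'\<in>GL n (Quot P1). \<exists>bi\<in>GL n (Quot P2). map_mat fps_to_fls b = b' * bi"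
proof -
  have N: "map_mat fps_to_fls (M * b) \<in> GL n (Quot P2)"
    using M b by (intro GL_Quot_if_congruent_one N1 P2 NP) simp
  have "map_mat fps_to_fls M \<in> GL n (Quot P1)" by (rule GL_Quot_if_congruent_one[OF M M1 P1 MP])
  then obtain Mi where Mi: "Mi \<in> GL n (Quot P1)" "Mi * map_mat fps_to_fls M = 1\<^sub>m n"
    by (rule GL_inverse)
  have "Mi \<in> carrier_mat n n" using Mi(1) unfolding GL_def by blast
  hence "Mi * map_mat fps_to_fls (M * b) = (Mi * map_mat fps_to_fls M) * map_mat fps_to_fls b"
    using fps_to_fls_hom.mat_hom_mult[OF M b] M b by (simp add: assoc_mult_mat[of _ n n _ n _ n])
  also have "\<dots> = map_mat fps_to_fls b" using Mi(2) b by simp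
  finally show ?thesis using Mi(1) N by metis
qed

section \<open>The multiplier construction\<close>

text \<open>Let \<open>b \<equiv> \<one> (mod t)\<close> have coefficients in a ring \<open>T\<close>, and let \<open>\<chi> : T \<rightarrow> X\<close> pick an
  \<open>X\<close>-part of every element (the rest lying in \<open>Y\<close>). We build \<open>M = \<Sum> M\<^sub>k t^k\<close> with \<open>M\<^sub>0 = \<one>\<close>
  recursively: with \<open>S\<^sub>k = \<Sum>\<^sub>m\<^sub><\<^sub>k M\<^sub>m b\<^sub>k\<^sub>-\<^sub>m\<close> we put \<open>M\<^sub>k = -\<chi>(S\<^sub>k)\<close>, so that the \<open>k\<close>-th coefficient
  of \<open>M b\<close> is \<open>S\<^sub>k - \<chi>(S\<^sub>k)\<close>, the \<open>Y\<close>-part of \<open>S\<^sub>k\<close>.\<close>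

function multiplier_coeff ::
    "nat \<Rightarrow> complex fps mat \<Rightarrow> (complex \<Rightarrow> complex) \<Rightarrow> nat \<Rightarrow> nat \<Rightarrow> nat \<Rightarrow> complex" where
  "multiplier_coeff n b \<chi> k p q = (if k = 0 then (if p = q then 1 else 0)
     else - \<chi> (\<Sum>m<k. \<Sum>r<n. multiplier_coeff n b \<chi> m p r * b $$ (r,q) $ (k - m)))"
  by auto
termination by (relation "measure (\<lambda>(_, _, _, k, _, _). k)") auto

declare multiplier_coeff.simps [simp del]

definition multiplier_partial_sum ::
    "nat \<Rightarrow> complex fps mat \<Rightarrow> (complex \<Rightarrow> complex) \<Rightarrow> nat \<Rightarrow> nat \<Rightarrow> nat \<Rightarrow> complex" where
  "multiplier_partial_sum n b \<chi> k p q =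
     (\<Sum>m<k. \<Sum>r<n. multiplier_coeff n b \<chi> m p r * b $$ (r,q) $ (k - m))"

definition multiplier_matrix :: "nat \<Rightarrow> complex fps mat \<Rightarrow> (complex \<Rightarrow> complex) \<Rightarrow> complex fps mat" where
  "multiplier_matrix n b \<chi> = mat n n (\<lambda>(p,q). Abs_fps (\<lambda>k. multiplier_coeff n b \<chi> k p q))"

lemma multiplier_coeff_0: "multiplier_coeff n b \<chi> 0 p q = (if p = q then 1 else 0)"
  by (simp add: multiplier_coeff.simps)

lemma multiplier_coeff_pos:
  "k > 0 \<Longrightarrow> multiplier_coeff n b \<chi> k p q = - \<chi> (multiplier_partial_sum n b \<chi> k p q)"
  unfolding multiplier_partial_sum_def by (subst multiplier_coeff.simps) simp

lemma multiplier_matrix_carrier: "multiplier_matrix n b \<chi> \<in> carrier_mat n n"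
  unfolding multiplier_matrix_def by simp

lemma multiplier_matrix_coeff:
  "p < n \<Longrightarrow> q < n \<Longrightarrow> multiplier_matrix n b \<chi> $$ (p,q) $ k = multiplier_coeff n b \<chi> k p q"
  unfolding multiplier_matrix_def by simp

text \<open>Because \<open>b\<^sub>0 = \<one>\<close>, the \<open>k\<close>-th coefficient of \<open>M b\<close> is \<open>M\<^sub>k + S\<^sub>k\<close>.\<close>

lemma multiplier_product_coeff:
  assumes b: "b \<in> carrier_mat n n" "congruent_one_mod_t n b" and pq: "p < n" "q < n"
  shows "(multiplier_matrix n b \<chi> * b) $$ (p,q) $ k =
    multiplier_coeff n b \<chi> k p q + multiplier_partial_sum n b \<chi> k p q"
proof -
  let ?M = "multiplier_matrix n b \<chi>" and ?c = "multiplier_coeff n b \<chi>"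
  have "(?M * b) $$ (p,q) $ k = (\<Sum>r<n. (?M $$ (p, r) * b $$ (r, q)) $ k)"
    using multiplier_matrix_carrier[of n b \<chi>] b pq
    by (simp add: scalar_prod_def atLeast0LessThan fps_sum_nth)
  also have "\<dots> = (\<Sum>r<n. \<Sum>m=0..k. ?c m p r * b $$ (r,q) $ (k - m))"
    by (intro sum.cong refl) (simp add: fps_mult_nth multiplier_matrix_coeff pq)
  also have "\<dots> = (\<Sum>r<n. (\<Sum>m<k. ?c m p r * b $$ (r,q) $ (k - m)) + ?c k p r * b $$ (r,q) $ 0)"
    by (intro sum.cong refl) (simp add: atLeast0AtMost lessThan_Suc_atMost[symmetric])
  also have "\<dots> = multiplier_partial_sum n b \<chi> k p q + (\<Sum>r<n. ?c k p r * b $$ (r,q) $ 0)"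
    unfolding multiplier_partial_sum_def sum.distrib by (simp add: sum.swap[of _ "{..<k}"])
  also have "(\<Sum>r<n. ?c k p r * b $$ (r,q) $ 0) = (\<Sum>r<n. if r = q then ?c k p q else 0)"
    using b(2) pq unfolding congruent_one_mod_t_def by (intro sum.cong refl) simp
  also have "\<dots> = ?c k p q" using pq by simp
  finally show ?thesis by simp
qed

lemma multiplier_congruent_one:
  assumes b: "b \<in> carrier_mat n n" "congruent_one_mod_t n b"
  shows "congruent_one_mod_t n (multiplier_matrix n b \<chi>)"
    and "congruent_one_mod_t n (multiplier_matrix n b \<chi> * b)"
  unfolding congruent_one_mod_t_def
  by (simp_all add: multiplier_matrix_coeff multiplier_coeff_0 multiplier_product_coeff[OF b]
      multiplier_partial_sum_def)

lemma multiplier_coeff_mem: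
  fixes b :: "complex fps mat"
  assumes X: "is_subring X" and T: "is_subring T" and XT: "X \<subseteq> T"
    and \<chi>: "\<And>c. c \<in> T \<Longrightarrow> \<chi> c \<in> X" and bT: "\<And>p q k. p < n \<Longrightarrow> q < n \<Longrightarrow> b $$ (p,q) $ k \<in> T"
    and q: "q < n"
  shows "multiplier_coeff n b \<chi> k p q \<in> X" and "multiplier_partial_sum n b \<chi> k p q \<in> T"
proof -
  have S_mem: "multiplier_partial_sum n b \<chi> k p q \<in> T"
    if "\<And>m r. m < k \<Longrightarrow> r < n \<Longrightarrow> multiplier_coeff n b \<chi> m p r \<in> X" "q < n" for k p q
    unfolding multiplier_partial_sum_def
    using that XT bT by (intro subring_sum[OF T] subring_mult[OF T]) auto
  have coeff: "multiplier_coeff n b \<chi> k p q \<in> X" if "q < n" for k p q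
    using that
  proof (induction k arbitrary: q rule: less_induct)
    case (less k)
    show ?case
    proof (cases "k = 0")
      case True thus ?thesis using subring_0[OF X] subring_1[OF X] by (simp add: multiplier_coeff_0)
    next
      case False
      have "multiplier_partial_sum n b \<chi> k p q \<in> T" using less by (intro S_mem) auto
      thus ?thesis using False \<chi> subring_uminus[OF X] by (simp add: multiplier_coeff_pos)
    qed
  qed
  show "multiplier_coeff n b \<chi> k p q \<in> X" by (rule coeff[OF q])
  show "multiplier_partial_sum n b \<chi> k p q \<in> T" by (rule S_mem[OF coeff q])
qed

lemma multiplier_exists:
  fixes b :: "complex fps mat" and X Y T :: "complex set" and Q :: "complex \<Rightarrow> complex \<Rightarrow> bool"
  assumes X: "is_subring X" and Y: "is_subring Y" and T: "is_subring T" and XT: "X \<subseteq> T"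
    and b: "b \<in> carrier_mat n n" "congruent_one_mod_t n b"
    and bT: "\<And>p q k. p < n \<Longrightarrow> q < n \<Longrightarrow> b $$ (p,q) $ k \<in> T"
    and dec: "\<And>c. c \<in> T \<Longrightarrow> \<exists>x\<in>X. \<exists>y\<in>Y. c = x + y \<and> Q x y"
  obtains M where "M \<in> carrier_mat n n" "congruent_one_mod_t n M" "congruent_one_mod_t n (M * b)"
    "\<And>p q. p < n \<Longrightarrow> q < n \<Longrightarrow> M $$ (p,q) \<in> fps_over X"
    "\<And>p q. p < n \<Longrightarrow> q < n \<Longrightarrow> (M * b) $$ (p,q) \<in> fps_over Y"
    "\<And>p q k. p < n \<Longrightarrow> q < n \<Longrightarrow> k > 0 \<Longrightarrow> Q (- (M $$ (p,q) $ k)) ((M * b) $$ (p,q) $ k)"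
proof -
  have "\<forall>c\<in>T. \<exists>x. x \<in> X \<and> c - x \<in> Y \<and> Q x (c - x)" using dec by fastforce
  then obtain \<chi> where \<chi>: "\<And>c. c \<in> T \<Longrightarrow> \<chi> c \<in> X \<and> c - \<chi> c \<in> Y \<and> Q (\<chi> c) (c - \<chi> c)"
    by metis
  define M where "M = multiplier_matrix n b \<chi>"
  let ?S = "multiplier_partial_sum n b \<chi>"
  have \<chi>X: "\<And>c. c \<in> T \<Longrightarrow> \<chi> c \<in> X" using \<chi> by blast
  have M_X: "multiplier_coeff n b \<chi> k p q \<in> X" and S_T: "?S k p q \<in> T" if "q < n" for k p q
    using multiplier_coeff_mem[where X = X and T = T and n = n and b = b and \<chi> = \<chi>] X T XT \<chi>X bT that
    by blast+
  have pos_coeffs: "- (M $$ (p,q) $ k) = \<chi> (?S k p q)" "(M * b) $$ (p,q) $ k = ?S k p q - \<chi> (?S k p q)"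
    if pq: "p < n" "q < n" and k: "k > 0" for p q k
  proof -
    have M_k: "M $$ (p,q) $ k = - \<chi> (?S k p q)"
      unfolding M_def using k by (simp add: multiplier_matrix_coeff pq multiplier_coeff_pos)
    thus "- (M $$ (p,q) $ k) = \<chi> (?S k p q)" by simp
    show "(M * b) $$ (p,q) $ k = ?S k p q - \<chi> (?S k p q)"
      using multiplier_product_coeff[OF b pq, of \<chi> k] M_k multiplier_matrix_coeff[OF pq, of b \<chi> k]
      unfolding M_def by simp
  qed
  show ?thesis
  proof (rule that)
    show "M \<in> carrier_mat n n" "congruent_one_mod_t n M" "congruent_one_mod_t n (M * b)"
      unfolding M_def by (rule multiplier_matrix_carrier multiplier_congruent_one[OF b])+
    fix p q assume pq: "p < n" "q < n"
    show "M $$ (p,q) \<in> fps_over X"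
      unfolding fps_over_def M_def using M_X[OF pq(2)] by (simp add: multiplier_matrix_coeff pq)
    have "(M * b) $$ (p,q) $ k \<in> Y" for k
    proof (cases "k = 0")
      case True
      hence "(M * b) $$ (p,q) $ k = (if p = q then 1 else 0)"
        using multiplier_congruent_one(2)[OF b, of \<chi>] pq unfolding congruent_one_mod_t_def M_def by simp
      thus ?thesis using subring_0[OF Y] subring_1[OF Y] by simp
    qed (use pos_coeffs[OF pq] \<chi>[OF S_T[OF pq(2)]] in simp)
    thus "(M * b) $$ (p,q) \<in> fps_over Y" unfolding fps_over_def by simp
    fix k :: nat assume "k > 0"
    thus "Q (- (M $$ (p,q) $ k)) ((M * b) $$ (p,q) $ k)" using pos_coeffs[OF pq] \<chi>[OF S_T[OF pq(2)]] by simp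
  qed
qed

section \<open>Factorisation in the setting of the theorem\<close>

context comaximal_family
begin

lemma poly_bounded_subset_DJ:
  assumes "S \<subseteq> RJ K a J"
  shows "poly_bounded_fps K S \<subseteq> DJ K a i1 J"
proof -
  have "poly_bounded_fps K S \<subseteq> poly_bounded_fps K (RJ K a J)"
    using fps_over_mono[OF assms] unfolding poly_bounded_fps_def by blast
  also have "\<dots> \<subseteq> conv_fps_over K (RJ K a J)" by (rule poly_bounded_subset_conv[OF nf])
  finally show ?thesis unfolding DJ_def conv_fps_over_def by auto
qed

lemma fps_over_subset_DJ: "i1 \<in> J \<Longrightarrow> S \<subseteq> RJ K a J \<Longrightarrow> fps_over S \<subseteq> DJ K a i1 J"
  unfolding DJ_def by (simp add: fps_over_mono)

lemma house_delta: "house K (if p = q then 1 else 0) \<le> 1"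
  using house_0[OF nf] house_1[OF nf] by simp

text \<open>For a partition \<open>I = A \<union> B\<close> and \<open>b \<equiv> \<one>\<close> over \<open>R_I\<close>, the multiplier construction with the
  partial fractions of \<open>partial_fractions\<close> gives \<open>M \<equiv> \<one>\<close> over \<open>R_A\<close> with \<open>M b\<close> over \<open>R_B\<close>;
  the bounded summand can be put on either side, making \<open>M\<close> resp. \<open>M b\<close> polynomially
  bounded.\<close>

lemma bounded_multiplier:
  fixes b :: "complex fps mat"
  assumes AB: "A \<inter> B = {}" "A \<union> B = I"
    and b: "b \<in> carrier_mat n n" "congruent_one_mod_t n b"
    and bI: "\<And>p q k. p < n \<Longrightarrow> q < n \<Longrightarrow> b $$ (p,q) $ k \<in> RJ K a I"
  obtains M where "M \<in> carrier_mat n n" "congruent_one_mod_t n M" "congruent_one_mod_t n (M * b)"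
    "\<And>p q. p < n \<Longrightarrow> q < n \<Longrightarrow> M $$ (p,q) \<in> poly_bounded_fps K (RJ K a A)"
    "\<And>p q. p < n \<Longrightarrow> q < n \<Longrightarrow> (M * b) $$ (p,q) \<in> fps_over (RJ K a B)"
proof -
  obtain C where C: "\<And>x. x \<in> K \<Longrightarrow> \<exists>\<rho>\<in>R. house K (x - \<rho>) \<le> C" using bounded_remainder[OF nf] by blast
  have sub: "A \<subseteq> I" "B \<subseteq> I" using AB by auto
  have dec: "\<exists>x\<in>RJ K a A. \<exists>y\<in>RJ K a B. c = x + y \<and> house K x \<le> C" if "c \<in> RJ K a I" for c
    using partial_fractions[OF C sub AB that] by metis
  obtain M :: "complex fps mat" where M: "M \<in> carrier_mat n n" "congruent_one_mod_t n M" "congruent_one_mod_t n (M * b)"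
    "\<And>p q. p < n \<Longrightarrow> q < n \<Longrightarrow> M $$ (p,q) \<in> fps_over (RJ K a A)"
    "\<And>p q. p < n \<Longrightarrow> q < n \<Longrightarrow> (M * b) $$ (p,q) \<in> fps_over (RJ K a B)"
    "\<And>p q k. p < n \<Longrightarrow> q < n \<Longrightarrow> k > 0 \<Longrightarrow> house K (- (M $$ (p,q) $ k)) \<le> C"
    using multiplier_exists[OF is_subring_RJ is_subring_RJ is_subring_RJ RJ_mono b bI dec] sub
    by (metis order_refl)
  have "M $$ (p,q) \<in> poly_bounded_fps K (RJ K a A)" if pq: "p < n" "q < n" for p q
  proof (rule poly_bounded_fps_if_bounded[OF M(4)[OF pq]])
    fix k
    have "M $$ (p,q) $ k \<in> K" using M(4)[OF pq] RJ_subset_K[OF sub(1)] unfolding fps_over_def by blast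
    thus "house K (M $$ (p,q) $ k) \<le> max C 1"
      using M(2) M(6)[OF pq, of k] house_delta[of p q] pq house_uminus[OF nf]
      unfolding congruent_one_mod_t_def by (cases "k = 0") auto
  qed
  with M show ?thesis using that by blast
qed

lemma bounded_multiplier_product:
  fixes b :: "complex fps mat"
  assumes AB: "A \<inter> B = {}" "A \<union> B = I"
    and b: "b \<in> carrier_mat n n" "congruent_one_mod_t n b"
    and bI: "\<And>p q k. p < n \<Longrightarrow> q < n \<Longrightarrow> b $$ (p,q) $ k \<in> RJ K a I"
  obtains M where "M \<in> carrier_mat n n" "congruent_one_mod_t n M" "congruent_one_mod_t n (M * b)"
    "\<And>p q. p < n \<Longrightarrow> q < n \<Longrightarrow> M $$ (p,q) \<in> fps_over (RJ K a A)"
    "\<And>p q. p < n \<Longrightarrow> q < n \<Longrightarrow> (M * b) $$ (p,q) \<in> poly_bounded_fps K (RJ K a B)"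
proof -
  obtain C where C: "\<And>x. x \<in> K \<Longrightarrow> \<exists>\<rho>\<in>R. house K (x - \<rho>) \<le> C" using bounded_remainder[OF nf] by blast
  have sub: "A \<subseteq> I" "B \<subseteq> I" using AB by auto
  have dec: "\<exists>x\<in>RJ K a A. \<exists>y\<in>RJ K a B. c = x + y \<and> house K y \<le> C" if "c \<in> RJ K a I" for c
  proof -
    have "B \<inter> A = {}" "B \<union> A = I" using AB by auto
    from partial_fractions[OF C sub(2,1) this that] show ?thesis by (metis add.commute)
  qed
  obtain M :: "complex fps mat" where M: "M \<in> carrier_mat n n" "congruent_one_mod_t n M" "congruent_one_mod_t n (M * b)"
    "\<And>p q. p < n \<Longrightarrow> q < n \<Longrightarrow> M $$ (p,q) \<in> fps_over (RJ K a A)"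
    "\<And>p q. p < n \<Longrightarrow> q < n \<Longrightarrow> (M * b) $$ (p,q) \<in> fps_over (RJ K a B)"
    "\<And>p q k. p < n \<Longrightarrow> q < n \<Longrightarrow> k > 0 \<Longrightarrow> house K ((M * b) $$ (p,q) $ k) \<le> C"
    using multiplier_exists[OF is_subring_RJ is_subring_RJ is_subring_RJ RJ_mono b bI dec] sub
    by (metis order_refl)
  have "(M * b) $$ (p,q) \<in> poly_bounded_fps K (RJ K a B)" if pq: "p < n" "q < n" for p q
  proof (rule poly_bounded_fps_if_bounded[OF M(5)[OF pq]])
    fix k show "house K ((M * b) $$ (p,q) $ k) \<le> max C 1"
      using M(3) M(6)[OF pq, of k] house_delta[of p q] pq
      unfolding congruent_one_mod_t_def by (cases "k = 0") auto
  qed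
  with M show ?thesis using that by blast
qed

text \<open>The factorisation at an index \<open>i \<noteq> 1\<close>: \<open>b' = M\<^sup>-\<^sup>1\<close> is built from polynomially bounded series
  over \<open>R[1/a\<^sub>i]\<close> (so lies in every \<open>Q\<^sub>j\<close>, \<open>j \<noteq> i\<close>), and \<open>b\<^sub>i = M b\<close> from arbitrary series over
  \<open>R[1/a\<^sub>I\<^sub>-\<^sub>{\<^sub>i\<^sub>}]\<close>, which form \<open>D\<^sub>i\<close> since \<open>1 \<in> I - {i}\<close>.\<close>

lemma factorization_at_ordinary_index:
  fixes b :: "complex fps mat"
  assumes i: "i \<in> I" "i \<noteq> i1" and i1: "i1 \<in> I"
    and b: "b \<in> carrier_mat n n" "congruent_one_mod_t n b"
    and bI: "\<And>p q k. p < n \<Longrightarrow> q < n \<Longrightarrow> b $$ (p,q) $ k \<in> RJ K a I"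
  shows "\<exists>b'\<in>GL n (Qi' K a i1 I i). \<exists>bi\<in>GL n (Qi K a i1 I i). map_mat fps_to_fls b = b' * bi"
proof -
  let ?P1 = "poly_bounded_fps K (RJ K a {i})" and ?P2 = "fps_over (RJ K a (I - {i}))"
  have AB: "{i} \<inter> (I - {i}) = {}" "{i} \<union> (I - {i}) = I" using i by auto
  obtain M :: "complex fps mat" where M: "M \<in> carrier_mat n n" "congruent_one_mod_t n M"
    "congruent_one_mod_t n (M * b)" "\<And>p q. p < n \<Longrightarrow> q < n \<Longrightarrow> M $$ (p,q) \<in> ?P1"
    "\<And>p q. p < n \<Longrightarrow> q < n \<Longrightarrow> (M * b) $$ (p,q) \<in> ?P2"
    using bounded_multiplier[OF AB b bI] by blast
  have P1: "is_subring ?P1" using i by (intro is_subring_poly_bounded_fps nf is_subring_RJ RJ_subset_K) auto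
  have P2: "is_subring ?P2" by (intro is_subring_fps_over is_subring_RJ) auto
  obtain b' bi where fact: "b' \<in> GL n (Quot ?P1)" "bi \<in> GL n (Quot ?P2)" "map_mat fps_to_fls b = b' * bi"
    using factorization_from_multiplier[OF b(1) M(1-3) P1 M(4) P2 M(5)] by blast
  have "Quot ?P1 \<subseteq> Quot (DJ K a i1 (I - {j}))" if "j \<in> I - {i}" for j
    using i that by (intro Quot_mono poly_bounded_subset_DJ RJ_mono) auto
  hence "Quot ?P1 \<subseteq> Qi' K a i1 I i" unfolding Qi'_def Qi_def by blast
  hence "b' \<in> GL n (Qi' K a i1 I i)" using fact(1) GL_mono by blast
  moreover have "Quot ?P2 \<subseteq> Qi K a i1 I i"
    unfolding Qi_def using i i1 by (intro Quot_mono fps_over_subset_DJ) auto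
  hence "bi \<in> GL n (Qi K a i1 I i)" using fact(2) GL_mono by blast
  ultimately show ?thesis using fact(3) by blast
qed

text \<open>The factorisation at the distinguished index \<open>1\<close>, with the roles of the factors
  exchanged: now \<open>b\<^sub>1 = M b\<close> must be convergent.\<close>

lemma factorization_at_distinguished_index:
  fixes b :: "complex fps mat"
  assumes i1: "i1 \<in> I"
    and b: "b \<in> carrier_mat n n" "congruent_one_mod_t n b"
    and bI: "\<And>p q k. p < n \<Longrightarrow> q < n \<Longrightarrow> b $$ (p,q) $ k \<in> RJ K a I"
  shows "\<exists>b'\<in>GL n (Qi' K a i1 I i1). \<exists>bi\<in>GL n (Qi K a i1 I i1). map_mat fps_to_fls b = b' * bi"
proof -
  let ?P1 = "fps_over (RJ K a {i1})" and ?P2 = "poly_bounded_fps K (RJ K a (I - {i1}))"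
  have AB: "{i1} \<inter> (I - {i1}) = {}" "{i1} \<union> (I - {i1}) = I" using i1 by auto
  obtain M :: "complex fps mat" where M: "M \<in> carrier_mat n n" "congruent_one_mod_t n M"
    "congruent_one_mod_t n (M * b)" "\<And>p q. p < n \<Longrightarrow> q < n \<Longrightarrow> M $$ (p,q) \<in> ?P1"
    "\<And>p q. p < n \<Longrightarrow> q < n \<Longrightarrow> (M * b) $$ (p,q) \<in> ?P2"
    using bounded_multiplier_product[OF AB b bI] by blast
  have P1: "is_subring ?P1" using i1 by (intro is_subring_fps_over is_subring_RJ) auto
  have P2: "is_subring ?P2" by (intro is_subring_poly_bounded_fps nf is_subring_RJ RJ_subset_K) auto
  obtain b' bi where fact: "b' \<in> GL n (Quot ?P1)" "bi \<in> GL n (Quot ?P2)" "map_mat fps_to_fls b = b' * bi"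
    using factorization_from_multiplier[OF b(1) M(1-3) P1 M(4) P2 M(5)] by blast
  have "Quot ?P1 \<subseteq> Quot (DJ K a i1 (I - {j}))" if "j \<in> I - {i1}" for j
    using i1 that by (intro Quot_mono fps_over_subset_DJ RJ_mono) auto
  hence "Quot ?P1 \<subseteq> Qi' K a i1 I i1" unfolding Qi'_def Qi_def by blast
  hence "b' \<in> GL n (Qi' K a i1 I i1)" using fact(1) GL_mono by blast
  moreover have "Quot ?P2 \<subseteq> Qi K a i1 I i1"
    unfolding Qi_def by (intro Quot_mono poly_bounded_subset_DJ) simp
  hence "bi \<in> GL n (Qi K a i1 I i1)" using fact(2) GL_mono by blast
  ultimately show ?thesis using fact(3) by blast
qed

end

theorem proposition3p4:
  fixes K :: "complex set" and I :: "'i set" and i1 :: 'i and a :: "'i \<Rightarrow> complex"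
    and n :: nat and b :: "complex fps mat"
  assumes K: "number_field K"
    and I: "finite I" "i1 \<in> I"
    and a_int: "\<And>i. i \<in> I \<Longrightarrow> a i \<in> ring_of_integers K"
    and a_nz: "\<And>i. i \<in> I \<Longrightarrow> a i \<noteq> 0"
    and a_nonunit: "\<And>i. i \<in> I \<Longrightarrow> \<not> (\<exists>u \<in> ring_of_integers K. a i * u = 1)"
    and a_coprime: "\<And>i j. i \<in> I \<Longrightarrow> j \<in> I \<Longrightarrow> i \<noteq> j \<Longrightarrow>
        (\<exists>x \<in> ring_of_integers K. \<exists>y \<in> ring_of_integers K. x * a i + y * a j = 1)"
    and b: "b \<in> carrier_mat n n" "elements_mat b \<subseteq> DJ K a i1 I"
    and b_close: "t_abs_mat (b - 1\<^sub>m n) < 1"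
  shows "\<forall>i \<in> I. \<exists>b' \<in> GL n (Qi' K a i1 I i). \<exists>bi \<in> GL n (Qi K a i1 I i).
           map_mat fps_to_fls b = b' * bi"
proof
  fix i assume i: "i \<in> I"
  interpret comaximal_family K I a
    using K I(1) a_int a_nz a_coprime by unfold_locales
  have b1: "congruent_one_mod_t n b" by (rule congruent_one_mod_t_if_t_abs[OF b(1) b_close])
  have bI: "b $$ (p,q) $ k \<in> RJ K a I" if "p < n" "q < n" for p q k
    using b that I(2) unfolding DJ_def fps_over_def by auto
  show "\<exists>b' \<in> GL n (Qi' K a i1 I i). \<exists>bi \<in> GL n (Qi K a i1 I i). map_mat fps_to_fls b = b' * bi"
  proof (cases "i = i1")
    case True
    thus ?thesis using factorization_at_distinguished_index[OF I(2) b(1) b1 bI] by simp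
  next
    case False
    thus ?thesis using factorization_at_ordinary_index[OF i False I(2) b(1) b1 bI] by simp
  qed
qed

end
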